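(* Let $N\ge 4$ be even, $p<0$, and let $0\le r_1<\dots<r_N\le 1$ be distinct points. Define $\sigma\in S_N$ by $$\sigma(i)=\begin{cases}1 & i=1,\\ \frac N2-i+3 & i \text{ even},\ i\le \frac N2+1,\\ N-i+3 & i\text{ odd},\ 1<i\le\frac N2+1,\\ i-\frac N2 & i\text{ even},\ i>\frac N2+1,\\ i & i\text{ odd},\ i>\frac N2+1.\end{cases}$$ Let $\tau\in S_N$ be the cyclic shift $\tau(i)=i+1$ for $i\le N-1$, $\tau(N)=1$, and set $\sigma_k=\tau^k\circ\sigma$ for $k=1,\dots,N$. Then an optimal Hamiltonian cycle is among the cycles $h_k^*=h[\sigma_k]$, $k=1,\dots,N$; i.e. $\min_{k}E(h[\sigma_k])\le E(h)$ for every Hamiltonian cycle $h$ of $\mathcal K_N$.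
   Context: The points are the vertices of the complete graph $\mathcal K_N$. For $p\in\mathbb R$ the weight of the edge $\{r_i,r_j\}$ is $w_{ij}=|r_i-r_j|^p$, and the cost of a Hamiltonian cycle $h$ is $E(h)=\sum_{e\in h}w_e$. For $\sigma\in S_N$, $h[\sigma]$ denotes the Hamiltonian cycle with edges $\{r_{\sigma(i)},r_{\sigma(i+1)}\}$, $i=1,\dots,N$, with $\sigma(N+1):=\sigma(1)$. *)

theory Defs
  imports Complex_Main "HOL-Combinatorics.Permutations"
begin

text \<open>Vertices of K_N are identified with the indices 1..N (points r 1 < ... < r N).
  An edge is a 2-element set of indices.\<close>

definition cyc_next :: "nat \<Rightarrow> nat \<Rightarrow> nat" where
  "cyc_next N i = (if i = N then 1 else i + 1)"

definition cycle_edges :: "nat \<Rightarrow> (nat \<Rightarrow> nat) \<Rightarrow> nat set set" where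
  "cycle_edges N \<pi> = (\<lambda>i. {\<pi> i, \<pi> (cyc_next N i)}) ` {1..N}"

definition ham_cycle :: "nat \<Rightarrow> nat set set \<Rightarrow> bool" where
  "ham_cycle N H \<longleftrightarrow> (\<exists>\<pi>. \<pi> permutes {1..N} \<and> H = cycle_edges N \<pi>)"

definition edge_weight :: "(nat \<Rightarrow> real) \<Rightarrow> real \<Rightarrow> nat set \<Rightarrow> real" where
  "edge_weight r p e = \<bar>r (Min e) - r (Max e)\<bar> powr p"

definition cost :: "(nat \<Rightarrow> real) \<Rightarrow> real \<Rightarrow> nat set set \<Rightarrow> real" where
  "cost r p H = (\<Sum>e\<in>H. edge_weight r p e)"

definition sigma0 :: "nat \<Rightarrow> nat \<Rightarrow> nat" where
  "sigma0 N i =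
     (if i = 1 then 1
      else if even i \<and> i \<le> N div 2 + 1 then N div 2 + 3 - i
      else if odd i \<and> i \<le> N div 2 + 1 then N + 3 - i
      else if even i then i - N div 2
      else i)"

definition tau :: "nat \<Rightarrow> nat \<Rightarrow> nat" where
  "tau N i = (if i \<le> N - 1 then i + 1 else 1)"

end

theory Submission
  imports Defs
begin

text \<open>For p < 0 the cheapest way to match four points on a line in two pairs is the crossing one,
  by convexity of t powr p. Hence an optimal tour is 2-opt stable: no 2-opt move turns two
  non-crossing tour edges into crossing ones. For N = 2h stability confines every tour edge to
  cyclic length h-1, h or h+1, so the tour lives on a ladder whose rails are 1..h and h+1..2h.
  Each vertex uses exactly two of its three ladder edges; a propagation argument along the ladder,
  together with two more 2-opt obstructions, leaves a single tour up to rotation, the zigzag tour,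
  whose rotations are the cycles h[sigma_k].\<close>

lemma powr_neg_sum_less:
  fixes p a b c :: real
  assumes p: "p < 0" and a: "0 < a" and b: "0 < b" and c: "0 < c"
  shows "(a + b) powr p + (b + c) powr p < b powr p + (a + b + c) powr p"
proof -
  define g where "g t = (t + a) powr p - t powr p" for t
  have "g b < g (b + c)"
  proof (rule DERIV_pos_imp_increasing[where f=g])
    show "b < b + c" using c by simp
    fix x assume x: "b \<le> x" "x \<le> b + c"
    have x0: "0 < x" using x b by simp
    have d: "(g has_real_derivative (p * (x + a) powr (p - 1) * 1 - p * x powr (p - 1))) (at x)"
      unfolding g_def
      by (rule derivative_eq_intros has_real_derivative_powr[THEN DERIV_chain2] | use x0 a in simp)+
    have "(x + a) powr (p - 1) < x powr (p - 1)"
      using powr_less_mono2_neg[of "p - 1" x "x + a"] p x0 a by simp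
    then have "0 < p * (x + a) powr (p - 1) * 1 - p * x powr (p - 1)"
      using p by (simp add: algebra_simps mult_less_cancel_left_neg)
    then show "\<exists>y. (g has_real_derivative y) (at x) \<and> 0 < y" using d by blast
  qed
  then show ?thesis unfolding g_def by (simp add: algebra_simps)
qed

definition between :: "'a::linorder \<Rightarrow> 'a \<Rightarrow> 'a \<Rightarrow> bool" where
  "between a b c \<longleftrightarrow> min a b < c \<and> c < max a b"

text \<open>For distinct points, crossing a b c d says that the chords {a,b} and {c,d} interleave.\<close>
definition crossing :: "'a::linorder \<Rightarrow> 'a \<Rightarrow> 'a \<Rightarrow> 'a \<Rightarrow> bool" where
  "crossing a b c d \<longleftrightarrow> between a b c \<noteq> between a b d"

lemma crossing_commute_left: "crossing a b c d = crossing b a c d"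
  by (simp add: crossing_def between_def min.commute max.commute)

lemma crossing_commute_right: "crossing a b c d = crossing a b d c"
  by (auto simp add: crossing_def)

lemma crossing_sym: "distinct [a, b, c, d] \<Longrightarrow> crossing a b c d = crossing c d a b"
  unfolding crossing_def between_def by (auto simp: min_def max_def)

definition pair_weight :: "(nat \<Rightarrow> real) \<Rightarrow> real \<Rightarrow> nat \<Rightarrow> nat \<Rightarrow> real" where
  "pair_weight r p x y = \<bar>r x - r y\<bar> powr p"

lemma pair_weight_commute: "pair_weight r p x y = pair_weight r p y x"
  by (simp add: pair_weight_def abs_minus_commute)

lemma edge_weight_doubleton: "edge_weight r p {a, b} = pair_weight r p a b"
  by (cases "a \<le> b") (auto simp: edge_weight_def pair_weight_def abs_minus_commute max_def min_def)

lemma crossing_pair_weight_less_least_first: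
  assumes p: "p < 0" and mono: "strict_mono_on S r"
    and S: "a \<in> S" "b \<in> S" "u \<in> S" "v \<in> S"
    and d: "distinct [a, b, u, v]" and min: "a < b" "a < u" "a < v"
    and not_crossing: "\<not> crossing a b u v" and crossing: "crossing a u b v"
  shows "pair_weight r p a u + pair_weight r p b v < pair_weight r p a b + pair_weight r p u v"
proof (cases "b < u")
  case True
  with crossing min d have "u < v" unfolding crossing_def between_def by (auto simp: min_def max_def)
  then have r: "r a < r b" "r b < r u" "r u < r v"
    using mono S min True by (auto simp: strict_mono_on_def)
  have "pair_weight r p a u < pair_weight r p a b" "pair_weight r p b v < pair_weight r p u v"
    unfolding pair_weight_def using r p by (auto intro!: powr_less_mono2_neg)
  then show ?thesis by simp
next
  case False
  then have ub: "u < b" using d by auto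
  with crossing min d have "v < u" unfolding crossing_def between_def by (auto simp: min_def max_def)
  then have r: "r a < r v" "r v < r u" "r u < r b"
    using mono S min ub by (auto simp: strict_mono_on_def)
  have "(r v - r a + (r u - r v)) powr p + ((r u - r v) + (r b - r u)) powr p
        < (r u - r v) powr p + (r v - r a + (r u - r v) + (r b - r u)) powr p"
    using r p by (intro powr_neg_sum_less) auto
  then show ?thesis unfolding pair_weight_def using r by (simp add: abs_if)
qed

lemma crossing_pair_weight_less:
  assumes p: "p < 0" and mono: "strict_mono_on S r"
    and S: "a \<in> S" "b \<in> S" "u \<in> S" "v \<in> S"
    and d: "distinct [a, b, u, v]"
    and not_crossing: "\<not> crossing a b u v" and crossing: "crossing a u b v"
  shows "pair_weight r p a u + pair_weight r p b v < pair_weight r p a b + pair_weight r p u v"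
proof -
  have c1: "\<not> crossing u v a b" using not_crossing d crossing_sym[of a b u v] by auto
  have c2: "crossing u a v b"
    using crossing crossing_commute_left[of a u] crossing_commute_right crossing_commute_left[of u]
      by metis
  have c3: "\<not> crossing b a v u" using not_crossing crossing_commute_left crossing_commute_right by metis
  have c4: "crossing b v a u" using crossing d crossing_sym[of a u b v] by auto
  have c5: "\<not> crossing v u b a" using c1 crossing_commute_left crossing_commute_right by metis
  have c6: "crossing v b u a" using c2 d crossing_sym[of u a v b] by auto
  consider "a < b \<and> a < u \<and> a < v" | "u < a \<and> u < b \<and> u < v" | "b < a \<and> b < u \<and> b < v"
    | "v < a \<and> v < b \<and> v < u" using d by (auto simp: not_less) (metis less_trans linorder_neqE_nat)+
  then show ?thesis
  proof cases
    case 1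
    then show ?thesis
      using crossing_pair_weight_less_least_first[OF p mono S d _ _ _ not_crossing crossing]
      by auto
  next
    case 2 then show ?thesis
      using crossing_pair_weight_less_least_first[OF p mono S(3,4,1,2) _ _ _ _ c1 c2] d
      by (auto simp: pair_weight_commute)
  next
    case 3 then show ?thesis
      using crossing_pair_weight_less_least_first[OF p mono S(2,1,4,3) _ _ _ _ c3 c4] d
      by (auto simp: pair_weight_commute)
  next
    case 4 then show ?thesis
      using crossing_pair_weight_less_least_first[OF p mono S(4,3,2,1) _ _ _ _ c5 c6] d
      by (auto simp: pair_weight_commute)
  qed
qed

lemma cyc_next_in: "k \<in> {1..N} \<Longrightarrow> cyc_next N k \<in> {1..N}"
  by (auto simp: cyc_next_def)

lemma cyc_next_neq: "2 \<le> N \<Longrightarrow> k \<in> {1..N} \<Longrightarrow> cyc_next N k \<noteq> k"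
  by (auto simp: cyc_next_def)

lemma cyc_next_cyc_next_neq: "3 \<le> N \<Longrightarrow> k \<in> {1..N} \<Longrightarrow> cyc_next N (cyc_next N k) \<noteq> k"
  by (auto simp: cyc_next_def)

lemma bij_betw_cyc_next: "bij_betw (cyc_next N) {1..N} {1..N}"
  by (rule bij_betw_byWitness[where f'="\<lambda>k. if k = 1 then N else k - 1"]) (auto simp: cyc_next_def)

lemma inj_on_tour_edge:
  assumes inj: "inj_on \<pi> {1..N}" and N: "3 \<le> N"
  shows "inj_on (\<lambda>k. {\<pi> k, \<pi> (cyc_next N k)}) {1..N}"
proof (rule inj_onI)
  fix k l assume k: "k \<in> {1..N}" and l: "l \<in> {1..N}"
    and e: "{\<pi> k, \<pi> (cyc_next N k)} = {\<pi> l, \<pi> (cyc_next N l)}"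
  from e consider "\<pi> k = \<pi> l" | "\<pi> k = \<pi> (cyc_next N l)" "\<pi> (cyc_next N k) = \<pi> l"
    by (auto simp: doubleton_eq_iff)
  then show "k = l"
  proof cases
    case 1 then show ?thesis using inj k l by (auto dest: inj_onD)
  next
    case 2
    then have "k = cyc_next N l" "cyc_next N k = l"
      using inj k l cyc_next_in[OF k] cyc_next_in[OF l] by (auto dest: inj_onD)
    then show ?thesis using cyc_next_cyc_next_neq[OF N l] by simp
  qed
qed

lemma card_cycle_edges: "inj_on \<pi> {1..N} \<Longrightarrow> 3 \<le> N \<Longrightarrow> card (cycle_edges N \<pi>) = N"
  unfolding cycle_edges_def by (subst card_image[OF inj_on_tour_edge]) auto

lemma cycle_edges_cong: "(\<And>i. i \<in> {1..N} \<Longrightarrow> f i = g i) \<Longrightarrow> cycle_edges N f = cycle_edges N g"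
  unfolding cycle_edges_def using cyc_next_in by (auto intro!: image_cong)

definition tour_cost :: "(nat \<Rightarrow> real) \<Rightarrow> real \<Rightarrow> nat \<Rightarrow> (nat \<Rightarrow> nat) \<Rightarrow> real" where
  "tour_cost r p N \<pi> = (\<Sum>k\<in>{1..N}. pair_weight r p (\<pi> k) (\<pi> (cyc_next N k)))"

lemma cost_cycle_edges:
  "inj_on \<pi> {1..N} \<Longrightarrow> 3 \<le> N \<Longrightarrow> cost r p (cycle_edges N \<pi>) = tour_cost r p N \<pi>"
  unfolding cost_def cycle_edges_def tour_cost_def
  by (subst sum.reindex[OF inj_on_tour_edge]) (simp_all add: edge_weight_doubleton)

lemma ex_optimal_tour:
  "\<exists>\<pi>. \<pi> permutes {1..N} \<and> (\<forall>\<pi>'. \<pi>' permutes {1..N} \<longrightarrow> tour_cost r p N \<pi> \<le> tour_cost r p N \<pi>')"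
proof -
  have "finite {\<pi>. \<pi> permutes {1..N}}" by (rule finite_permutations) simp
  moreover have "{\<pi>. \<pi> permutes {1..N}} \<noteq> {}" using permutes_id by blast
  ultimately obtain \<pi> where "is_arg_min (tour_cost r p N) (\<lambda>\<pi>. \<pi> \<in> {\<pi>. \<pi> permutes {1..N}}) \<pi>"
    using ex_is_arg_min_if_finite by blast
  then show ?thesis by (auto simp: is_arg_min_linorder)
qed

lemma sum_split_segment:
  fixes g :: "nat \<Rightarrow> real"
  assumes "1 \<le> i" "i < j" "j \<le> N"
  shows "(\<Sum>k\<in>{1..N}. g k) = (\<Sum>k\<in>{1..N} - {i..j}. g k) + g i + g j + (\<Sum>k\<in>{i+1..j-1}. g k)"
proof -
  have "{i..j} = insert i (insert j {i+1..j-1})" using assms by auto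
  then have "(\<Sum>k\<in>{i..j}. g k) = g i + g j + (\<Sum>k\<in>{i+1..j-1}. g k)"
    using assms by (simp add: add.assoc)
  moreover have "(\<Sum>k\<in>{1..N}. g k) = (\<Sum>k\<in>{1..N} - {i..j}. g k) + (\<Sum>k\<in>{i..j}. g k)"
    using assms by (subst sum.subset_diff[of "{i..j}"]) auto
  ultimately show ?thesis by simp
qed

text \<open>Composing a tour with segment_reversal i j reverses the positions i+1, ..., j; this is the
  2-opt move exchanging the edges at positions i and j.\<close>
definition segment_reversal :: "nat \<Rightarrow> nat \<Rightarrow> nat \<Rightarrow> nat" where
  "segment_reversal i j k = (if i < k \<and> k \<le> j then i + j + 1 - k else k)"

lemma segment_reversal_permutes:
  assumes "1 \<le> i" "i < j" "j \<le> N"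
  shows "segment_reversal i j permutes {1..N}"
proof (rule bij_imp_permutes)
  show "bij_betw (segment_reversal i j) {1..N} {1..N}"
    by (rule bij_betw_byWitness[where f'="segment_reversal i j"])
      (use assms in \<open>auto simp: segment_reversal_def\<close>)
  show "\<And>x. x \<notin> {1..N} \<Longrightarrow> segment_reversal i j x = x"
    using assms by (auto simp: segment_reversal_def)
qed

lemma tour_cost_segment_reversal:
  assumes ij: "1 \<le> i" "i + 2 \<le> j" "j \<le> N"
  shows "tour_cost r p N (\<pi> \<circ> segment_reversal i j) = tour_cost r p N \<pi>
          - pair_weight r p (\<pi> i) (\<pi> (i+1)) - pair_weight r p (\<pi> j) (\<pi> (cyc_next N j))
          + pair_weight r p (\<pi> i) (\<pi> j) + pair_weight r p (\<pi> (i+1)) (\<pi> (cyc_next N j))"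
proof -
  define \<rho> where "\<rho> = \<pi> \<circ> segment_reversal i j"
  define g where "g k = pair_weight r p (\<pi> k) (\<pi> (cyc_next N k))" for k
  define g' where "g' k = pair_weight r p (\<rho> k) (\<rho> (cyc_next N k))" for k
  have ij': "1 \<le> i" "i < j" "j \<le> N" using ij by auto
  have outside: "(\<Sum>k\<in>{1..N} - {i..j}. g' k) = (\<Sum>k\<in>{1..N} - {i..j}. g k)"
    by (rule sum.cong) (use ij in \<open>auto simp: g_def g'_def \<rho>_def segment_reversal_def cyc_next_def\<close>)
  have inside: "(\<Sum>k\<in>{i+1..j-1}. g' k) = (\<Sum>k\<in>{i+1..j-1}. g k)"
  proof (rule sum.reindex_bij_witness[where i="\<lambda>k. i + j - k" and j="\<lambda>k. i + j - k"])
    fix k assume k: "k \<in> {i+1..j-1}"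
    show "i + j - (i + j - k) = k" "i + j - k \<in> {i+1..j-1}" using k by auto
    have "Suc (i + j - Suc k) = i + j - k" "i + j - k < N" "Suc (i + j) - k = Suc (i + j - k)"
      using k ij by auto
    then show "g (i + j - k) = g' k"
      using k ij
        by (auto simp: g_def g'_def \<rho>_def segment_reversal_def cyc_next_def pair_weight_commute)
  qed auto
  have "g' i = pair_weight r p (\<pi> i) (\<pi> j)" "g' j = pair_weight r p (\<pi> (i+1)) (\<pi> (cyc_next N j))"
    "g i = pair_weight r p (\<pi> i) (\<pi> (i+1))"
    using ij by (auto simp: g_def g'_def \<rho>_def segment_reversal_def cyc_next_def)
  then show ?thesis
    using sum_split_segment[OF ij', of g] sum_split_segment[OF ij', of g'] outside inside
    unfolding tour_cost_def \<rho>_def[symmetric] g_def g'_def by simp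
qed

text \<open>No 2-opt move turns a non-crossing pair of tour edges into a crossing one.\<close>
definition two_opt_stable :: "nat \<Rightarrow> (nat \<Rightarrow> nat) \<Rightarrow> bool" where
  "two_opt_stable N \<pi> \<longleftrightarrow> (\<forall>i\<in>{1..N}. \<forall>j\<in>{1..N}.
      distinct [\<pi> i, \<pi> (cyc_next N i), \<pi> j, \<pi> (cyc_next N j)] \<longrightarrow>
      crossing (\<pi> i) (\<pi> (cyc_next N i)) (\<pi> j) (\<pi> (cyc_next N j)) \<or>
      \<not> crossing (\<pi> i) (\<pi> j) (\<pi> (cyc_next N i)) (\<pi> (cyc_next N j)))"

lemma two_opt_stableD:
  assumes "two_opt_stable N \<pi>" and "i \<in> {1..N}" "j \<in> {1..N}"
    and "distinct [\<pi> i, \<pi> (cyc_next N i), \<pi> j, \<pi> (cyc_next N j)]"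
    and "\<not> crossing (\<pi> i) (\<pi> (cyc_next N i)) (\<pi> j) (\<pi> (cyc_next N j))"
  shows "\<not> crossing (\<pi> i) (\<pi> j) (\<pi> (cyc_next N i)) (\<pi> (cyc_next N j))"
  using assms unfolding two_opt_stable_def by blast

lemma two_opt_move_improves:
  assumes perm: "\<pi> permutes {1..N}" and p: "p < 0" and mono: "strict_mono_on {1..N} r"
    and ij: "i \<in> {1..N}" "j \<in> {1..N}" "i < j"
    and d: "distinct [\<pi> i, \<pi> (cyc_next N i), \<pi> j, \<pi> (cyc_next N j)]"
    and not_crossing: "\<not> crossing (\<pi> i) (\<pi> (cyc_next N i)) (\<pi> j) (\<pi> (cyc_next N j))"
    and crossing: "crossing (\<pi> i) (\<pi> j) (\<pi> (cyc_next N i)) (\<pi> (cyc_next N j))"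
  shows "tour_cost r p N (\<pi> \<circ> segment_reversal i j) < tour_cost r p N \<pi>"
proof -
  have in_range: "\<pi> x \<in> {1..N}" if "x \<in> {1..N}" for x using permutes_in_image[OF perm] that by blast
  have next_i: "cyc_next N i = i + 1" using ij by (auto simp: cyc_next_def)
  have j: "i + 2 \<le> j" using d next_i ij by (cases "j = i + 1") auto
  have "pair_weight r p (\<pi> i) (\<pi> j) + pair_weight r p (\<pi> (i+1)) (\<pi> (cyc_next N j))
      < pair_weight r p (\<pi> i) (\<pi> (i+1)) + pair_weight r p (\<pi> j) (\<pi> (cyc_next N j))"
    using crossing_pair_weight_less[OF p mono in_range in_range in_range in_range]
      d not_crossing crossing ij cyc_next_in unfolding next_i by simp
  then show ?thesis using tour_cost_segment_reversal[of i j N r p \<pi>] ij j by auto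
qed

lemma optimal_tour_two_opt_stable:
  assumes perm: "\<pi> permutes {1..N}" and p: "p < 0" and mono: "strict_mono_on {1..N} r"
    and opt: "\<And>\<pi>'. \<pi>' permutes {1..N} \<Longrightarrow> tour_cost r p N \<pi> \<le> tour_cost r p N \<pi>'"
  shows "two_opt_stable N \<pi>"
proof -
  have no_improving_move: False if ij: "i \<in> {1..N}" "j \<in> {1..N}" "i < j"
    and d: "distinct [\<pi> i, \<pi> (cyc_next N i), \<pi> j, \<pi> (cyc_next N j)]"
    and "\<not> crossing (\<pi> i) (\<pi> (cyc_next N i)) (\<pi> j) (\<pi> (cyc_next N j))"
    and "crossing (\<pi> i) (\<pi> j) (\<pi> (cyc_next N i)) (\<pi> (cyc_next N j))" for i j
  proof -
    have "(\<pi> \<circ> segment_reversal i j) permutes {1..N}"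
      using permutes_compose[OF segment_reversal_permutes perm] ij by auto
    then show False using two_opt_move_improves[OF perm p mono that] opt by fastforce
  qed
  show ?thesis unfolding two_opt_stable_def
  proof (intro ballI impI)
    fix i j assume ij: "i \<in> {1..N}" "j \<in> {1..N}"
      and d: "distinct [\<pi> i, \<pi> (cyc_next N i), \<pi> j, \<pi> (cyc_next N j)]"
    consider "i < j" | "j < i" using d by (cases "i < j") (auto simp: not_less le_less)
    then show "crossing (\<pi> i) (\<pi> (cyc_next N i)) (\<pi> j) (\<pi> (cyc_next N j)) \<or>
      \<not> crossing (\<pi> i) (\<pi> j) (\<pi> (cyc_next N i)) (\<pi> (cyc_next N j))"
    proof cases
      case 1 then show ?thesis using ij d no_improving_move by blast
    next
      case 2
      have "distinct [\<pi> j, \<pi> (cyc_next N j), \<pi> i, \<pi> (cyc_next N i)]" using d by auto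
      then show ?thesis using no_improving_move[OF ij(2,1) 2] d crossing_sym[of "\<pi> i"]
        crossing_commute_left crossing_commute_right by metis
    qed
  qed
qed

lemma stable_ascending_edges_overlap:
  assumes stable: "two_opt_stable N \<pi>" and k: "k \<in> {1..N}" and l: "l \<in> {1..N}"
    and up: "\<pi> k < \<pi> (cyc_next N k)" "\<pi> l < \<pi> (cyc_next N l)"
  shows "\<pi> k \<le> \<pi> (cyc_next N l)"
proof (rule ccontr)
  assume "\<not> ?thesis"
  then have "\<pi> l < \<pi> (cyc_next N l)" "\<pi> (cyc_next N l) < \<pi> k" "\<pi> k < \<pi> (cyc_next N k)" using up by auto
  then show False using two_opt_stableD[OF stable l k] by (simp add: crossing_def between_def)
qed

lemma stable_descending_edges_overlap:
  assumes stable: "two_opt_stable N \<pi>" and k: "k \<in> {1..N}" and l: "l \<in> {1..N}"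
    and down: "\<pi> (cyc_next N k) < \<pi> k" "\<pi> (cyc_next N l) < \<pi> l"
  shows "\<pi> (cyc_next N k) \<le> \<pi> l"
proof (rule ccontr)
  assume "\<not> ?thesis"
  then have "\<pi> (cyc_next N l) < \<pi> l" "\<pi> l < \<pi> (cyc_next N k)" "\<pi> (cyc_next N k) < \<pi> k"
    using down by auto
  then show False using two_opt_stableD[OF stable l k] by (simp add: crossing_def between_def)
qed

lemma card_le_if_inj_on_image_subset: "inj_on f A \<Longrightarrow> f ` A \<subseteq> {1..m} \<Longrightarrow> card A \<le> (m::nat)"
  using card_inj_on_le[of f A "{1..m}"] by simp

text \<open>Ascending edges of a stable tour pairwise overlap, so their starting points lie below the end
  of any one of them; dually for descending edges.\<close>
lemma stable_ascending_card_le: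
  assumes bij: "bij_betw \<pi> {1..N} {1..N}" and stable: "two_opt_stable N \<pi>"
    and k: "k \<in> {1..N}" "\<pi> k < \<pi> (cyc_next N k)" "\<pi> (cyc_next N k) \<le> m"
  shows "card {l \<in> {1..N}. \<pi> l < \<pi> (cyc_next N l)} \<le> m"
proof (rule card_le_if_inj_on_image_subset)
  show "inj_on \<pi> {l \<in> {1..N}. \<pi> l < \<pi> (cyc_next N l)}"
    using bij_betw_imp_inj_on[OF bij] by (rule inj_on_subset) auto
  show "\<pi> ` {l \<in> {1..N}. \<pi> l < \<pi> (cyc_next N l)} \<subseteq> {1..m}"
  proof (rule image_subsetI)
    fix l assume "l \<in> {l \<in> {1..N}. \<pi> l < \<pi> (cyc_next N l)}"
    then have l: "l \<in> {1..N}" "\<pi> l < \<pi> (cyc_next N l)" by simp_all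
    have "\<pi> l \<le> \<pi> (cyc_next N k)" using stable_ascending_edges_overlap[OF stable l(1) k(1) l(2) k(2)] .
    moreover have "\<pi> l \<in> {1..N}" using bij_betwE[OF bij] l(1) by blast
    ultimately show "\<pi> l \<in> {1..m}" using k(3) unfolding atLeastAtMost_iff by linarith
  qed
qed

lemma stable_descending_card_le:
  assumes bij: "bij_betw \<pi> {1..N} {1..N}" and stable: "two_opt_stable N \<pi>"
    and k: "k \<in> {1..N}" "\<pi> (cyc_next N k) < \<pi> k" "\<pi> k \<le> m"
  shows "card {l \<in> {1..N}. \<pi> (cyc_next N l) < \<pi> l} \<le> m"
proof (rule card_le_if_inj_on_image_subset)
  have bij_succ: "bij_betw (\<pi> \<circ> cyc_next N) {1..N} {1..N}"
    by (rule bij_betw_trans[OF bij_betw_cyc_next bij])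
  show "inj_on (\<pi> \<circ> cyc_next N) {l \<in> {1..N}. \<pi> (cyc_next N l) < \<pi> l}"
    using bij_betw_imp_inj_on[OF bij_succ] by (rule inj_on_subset) auto
  show "(\<pi> \<circ> cyc_next N) ` {l \<in> {1..N}. \<pi> (cyc_next N l) < \<pi> l} \<subseteq> {1..m}"
  proof (rule image_subsetI)
    fix l assume "l \<in> {l \<in> {1..N}. \<pi> (cyc_next N l) < \<pi> l}"
    then have l: "l \<in> {1..N}" "\<pi> (cyc_next N l) < \<pi> l" by simp_all
    have "\<pi> (cyc_next N l) \<le> \<pi> k" using stable_descending_edges_overlap[OF stable l(1) k(1) l(2) k(2)] .
    moreover have "\<pi> (cyc_next N l) \<in> {1..N}" using bij_betwE[OF bij] cyc_next_in[OF l(1)] by blast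
    ultimately show "(\<pi> \<circ> cyc_next N) l \<in> {1..m}"
      using k(3) unfolding atLeastAtMost_iff comp_apply by linarith
  qed
qed

definition cyc_shift :: "nat \<Rightarrow> nat \<Rightarrow> nat \<Rightarrow> nat" where
  "cyc_shift N t x = (x - 1 + t) mod N + 1"

lemma cyc_shift_in: "0 < N \<Longrightarrow> cyc_shift N t x \<in> {1..N}"
  by (auto simp: cyc_shift_def Suc_le_eq)

lemma cyc_shift_0: "x \<in> {1..N} \<Longrightarrow> cyc_shift N 0 x = x"
  by (auto simp: cyc_shift_def)

lemma cyc_shift_add: "cyc_shift N a (cyc_shift N b x) = cyc_shift N (a + b) x"
  by (simp add: cyc_shift_def mod_add_right_eq ac_simps)

lemma cyc_shift_commute: "cyc_shift N a (cyc_shift N b x) = cyc_shift N b (cyc_shift N a x)"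
  by (simp add: cyc_shift_add add.commute)

lemma cyc_shift_multiple:
  assumes "x \<in> {1..N}" and "t mod N = 0"
  shows "cyc_shift N t x = x"
proof -
  have "(x - 1 + t) mod N = (x - 1 + t mod N) mod N" by (rule mod_add_right_eq[symmetric])
  also have "\<dots> = x - 1" using assms by (simp, intro mod_less) auto
  finally show ?thesis using assms by (simp add: cyc_shift_def)
qed

lemma cyc_shift_eq:
  assumes x: "x \<in> {1..N}" and t: "t < N"
  shows "cyc_shift N t x = (if x + t \<le> N then x + t else x + t - N)"
proof (cases "x + t \<le> N")
  case True
  then show ?thesis using x by (simp add: cyc_shift_def)
next
  case False
  then have "(x - 1 + t) mod N = x - 1 + t - N" using x t by (simp add: le_mod_geq)
  then show ?thesis using False x by (simp add: cyc_shift_def)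
qed

lemma cyc_shift_1: "x \<in> {1..N} \<Longrightarrow> cyc_shift N 1 x = cyc_next N x"
  by (auto simp: cyc_shift_def cyc_next_def)

lemma add_mod_complement: "0 < N \<Longrightarrow> (N - t mod N + t) mod N = (0::nat)"
proof -
  assume N: "0 < N"
  have "t mod N < N" "t mod N \<le> t" using N by (simp_all add: mod_less_eq_dividend)
  then have "N - t mod N + t = N * Suc (t div N)"
    using mult_div_mod_eq[of N t] by (simp only: mult_Suc_right)
  then show ?thesis by simp
qed

lemma cyc_shift_inverse:
  assumes x: "x \<in> {1..N}" shows "cyc_shift N (N - t mod N) (cyc_shift N t x) = x"
  unfolding cyc_shift_add using x by (intro cyc_shift_multiple add_mod_complement) auto

lemma bij_betw_cyc_shift:
  assumes "0 < N" shows "bij_betw (cyc_shift N t) {1..N} {1..N}"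
  by (rule bij_betw_byWitness[where f'="cyc_shift N (N - t mod N)"])
    (auto simp: cyc_shift_in[OF assms, simplified] cyc_shift_inverse cyc_shift_commute[of N t])

lemma inj_on_cyc_shift: "inj_on (cyc_shift N t) {1..N}"
  by (metis inj_on_inverseI cyc_shift_inverse)

lemma cyc_shift_offset:
  assumes x: "x \<in> {1..N}" and y: "y \<in> {1..N}"
  shows "cyc_shift N ((y + N - x) mod N) x = y"
proof -
  have "(x - 1 + (y + N - x) mod N) mod N = (x - 1 + (y + N - x)) mod N" by (simp add: mod_add_right_eq)
  also have "x - 1 + (y + N - x) = (y - 1) + N" using x y by auto
  also have "((y - 1) + N) mod N = y - 1"
    using y by (simp only: mod_add_self2, intro mod_less) auto
  finally show ?thesis using y by (simp add: cyc_shift_def)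
qed

lemma cyc_shift_offset_inj:
  assumes "cyc_shift N a x = cyc_shift N b x" and "a < N" and "b < N"
  shows "a = b"
proof -
  have "cyc_shift N (x - 1) (a + 1) = cyc_shift N (x - 1) (b + 1)"
    using assms(1) by (simp add: cyc_shift_def ac_simps)
  then show ?thesis using inj_on_cyc_shift[of N "x - 1"] assms(2,3) by (auto dest: inj_onD)
qed

lemma cyc_offsets_sum:
  fixes x y N :: nat
  shows "x \<in> {1..N} \<Longrightarrow> y \<in> {1..N} \<Longrightarrow> x \<noteq> y \<Longrightarrow> (y + N - x) mod N + (x + N - y) mod N = N"
  by (cases "x < y") (auto simp: mod_if)

lemma funpow_tau_eq_cyc_shift: "x \<in> {1..N} \<Longrightarrow> (tau N ^^ k) x = cyc_shift N k x"
proof (induction k)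
  case 0 then show ?case by (simp add: cyc_shift_0)
next
  case (Suc k)
  have "cyc_shift N k x \<in> {1..N}" using Suc.prems cyc_shift_in[of N] by auto
  then have "tau N (cyc_shift N k x) = cyc_shift N 1 (cyc_shift N k x)"
    unfolding cyc_shift_1[OF \<open>cyc_shift N k x \<in> {1..N}\<close>] by (auto simp: tau_def cyc_next_def)
  then show ?case using Suc by (simp add: cyc_shift_add)
qed

lemma cyc_shift_1_less: "1 \<le> c \<Longrightarrow> c < N \<Longrightarrow> cyc_shift N 1 c = c + 1"
  by (simp add: cyc_shift_eq)

lemma cyc_shift_to_1: "x \<in> {1..N} \<Longrightarrow> y \<in> {1..N} \<Longrightarrow> cyc_shift N (N + 1 - x) y = (y + N - x) mod N + 1"
  by (simp add: cyc_shift_def algebra_simps)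

lemma between_Suc: "between (Suc a) (Suc b) (Suc c) = between a b c"
  by (simp add: between_def)

lemma between_wrap_end:
  "b < N \<Longrightarrow> c < N \<Longrightarrow> 0 < c \<Longrightarrow> b \<noteq> c \<Longrightarrow> between 1 (Suc b) (Suc c) \<longleftrightarrow> \<not> between N b c"
  by (auto simp: between_def min_def max_def)

lemma not_between_0: "\<not> between a b (0::nat)"
  by (simp add: between_def)

lemma not_between_above: "a < c \<Longrightarrow> b < c \<Longrightarrow> \<not> between a b c"
  by (auto simp: between_def less_max_iff_disj)

lemma crossing_cyc_shift_1:
  assumes d: "distinct [a, b, c, d]" and S: "a \<in> {1..N}" "b \<in> {1..N}" "c \<in> {1..N}" "d \<in> {1..N}"
  shows "crossing (cyc_shift N 1 a) (cyc_shift N 1 b) (cyc_shift N 1 c) (cyc_shift N 1 d)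
    = crossing a b c d"
proof -
  have shift: "cyc_shift N 1 x = (if x = N then 1 else Suc x)" if "x \<in> {1..N}" for x
    using cyc_shift_1[OF that] by (simp add: cyc_next_def)
  note shifts = shift[OF S(1)] shift[OF S(2)] shift[OF S(3)] shift[OF S(4)]
  have wrap_end: "crossing 1 (Suc y) (Suc z) (Suc w) = crossing N y z w"
    if "distinct [N, y, z, w]" "y \<in> {1..N}" "z \<in> {1..N}" "w \<in> {1..N}" for y z w
  proof -
    have "y < N" "z < N" "w < N" "0 < z" "0 < w" "y \<noteq> z" "y \<noteq> w" using that by auto
    then show ?thesis
      using between_wrap_end[of y N z] between_wrap_end[of y N w] by (auto simp: crossing_def)
  qed
  have wrap_mid: "crossing (Suc x) (Suc y) 1 (Suc w) = crossing x y N w"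
    if "distinct [x, y, N, w]" "x \<in> {1..N}" "y \<in> {1..N}" "w \<in> {1..N}" for x y w
  proof -
    have "x < N" "y < N" using that by auto
    then show ?thesis by (simp add: crossing_def between_Suc not_between_0 not_between_above)
  qed
  consider "N \<notin> {a, b, c, d}" | "a = N" | "b = N" | "c = N" | "d = N" by blast
  then show ?thesis
  proof cases
    case 1 then show ?thesis unfolding shifts by (simp add: crossing_def between_Suc)
  next
    case 2 then show ?thesis unfolding shifts using wrap_end d S by auto
  next
    case 3
    have "crossing (cyc_shift N 1 b) (cyc_shift N 1 a) (cyc_shift N 1 c) (cyc_shift N 1 d)
      = crossing b a c d"
      unfolding shifts using 3 wrap_end[of a c d] d S by auto
    then show ?thesis by (simp add: crossing_commute_left)
  next
    case 4 then show ?thesis unfolding shifts using wrap_mid d S by auto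
  next
    case 5
    have "crossing (cyc_shift N 1 a) (cyc_shift N 1 b) (cyc_shift N 1 d) (cyc_shift N 1 c)
      = crossing a b d c"
      unfolding shifts using 5 wrap_mid[of a b c] d S by auto
    then show ?thesis by (simp add: crossing_commute_right)
  qed
qed

lemma crossing_cyc_shift:
  assumes N: "0 < N" and d: "distinct [a, b, c, d]"
    and S: "a \<in> {1..N}" "b \<in> {1..N}" "c \<in> {1..N}" "d \<in> {1..N}"
  shows "crossing (cyc_shift N t a) (cyc_shift N t b) (cyc_shift N t c) (cyc_shift N t d)
    = crossing a b c d"
proof (induction t)
  case 0 then show ?case using S by (simp add: cyc_shift_0)
next
  case (Suc t)
  have "distinct [cyc_shift N t a, cyc_shift N t b, cyc_shift N t c, cyc_shift N t d]"
    using d S inj_onD[OF inj_on_cyc_shift[of N t]] by auto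
  then have "crossing (cyc_shift N 1 (cyc_shift N t a)) (cyc_shift N 1 (cyc_shift N t b))
      (cyc_shift N 1 (cyc_shift N t c)) (cyc_shift N 1 (cyc_shift N t d))
    = crossing (cyc_shift N t a) (cyc_shift N t b) (cyc_shift N t c) (cyc_shift N t d)"
    by (rule crossing_cyc_shift_1[OF _ cyc_shift_in[OF N] cyc_shift_in[OF N] cyc_shift_in[OF N]
      cyc_shift_in[OF N]])
  then show ?case using Suc.IH by (simp only: cyc_shift_add One_nat_def plus_nat.simps)
qed

lemma two_opt_stable_cyc_shift:
  assumes N: "0 < N" and bij: "bij_betw \<pi> {1..N} {1..N}" and stable: "two_opt_stable N \<pi>"
  shows "two_opt_stable N (cyc_shift N t \<circ> \<pi>)"
  unfolding two_opt_stable_def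
proof (intro ballI impI)
  fix i j assume i: "i \<in> {1..N}" and j: "j \<in> {1..N}"
    and d: "distinct [(cyc_shift N t \<circ> \<pi>) i, (cyc_shift N t \<circ> \<pi>) (cyc_next N i),
                      (cyc_shift N t \<circ> \<pi>) j, (cyc_shift N t \<circ> \<pi>) (cyc_next N j)]"
  have S: "\<pi> i \<in> {1..N}" "\<pi> (cyc_next N i) \<in> {1..N}" "\<pi> j \<in> {1..N}" "\<pi> (cyc_next N j) \<in> {1..N}"
    using bij_betwE[OF bij] cyc_next_in i j by auto
  have d0: "distinct [\<pi> i, \<pi> (cyc_next N i), \<pi> j, \<pi> (cyc_next N j)]" using d by auto
  then have d1: "distinct [\<pi> i, \<pi> j, \<pi> (cyc_next N i), \<pi> (cyc_next N j)]" by auto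
  show "crossing ((cyc_shift N t \<circ> \<pi>) i) ((cyc_shift N t \<circ> \<pi>) (cyc_next N i))
                 ((cyc_shift N t \<circ> \<pi>) j) ((cyc_shift N t \<circ> \<pi>) (cyc_next N j)) \<or>
        \<not> crossing ((cyc_shift N t \<circ> \<pi>) i) ((cyc_shift N t \<circ> \<pi>) j)
                 ((cyc_shift N t \<circ> \<pi>) (cyc_next N i)) ((cyc_shift N t \<circ> \<pi>) (cyc_next N j))"
    unfolding comp_apply crossing_cyc_shift[OF N d0 S] crossing_cyc_shift[OF N d1 S(1,3,2,4)]
    using stable i j d0 unfolding two_opt_stable_def by blast
qed

lemma cyc_next_induct:
  assumes k0: "k0 \<in> {1..N}" "P k0"
    and step: "\<And>k. k \<in> {1..N} \<Longrightarrow> P k \<Longrightarrow> P (cyc_next N k)"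
    and k: "k \<in> {1..N}"
  shows "P k"
proof -
  have "P (cyc_shift N m k0)" for m
  proof (induction m)
    case 0 then show ?case using k0 by (simp add: cyc_shift_0)
  next
    case (Suc m)
    have "cyc_shift N m k0 \<in> {1..N}" using k0(1) cyc_shift_in[of N] by auto
    then have "cyc_shift N (Suc m) k0 = cyc_next N (cyc_shift N m k0)"
      using cyc_shift_add[of N 1 m k0] cyc_shift_1 by simp
    then show ?case using step[OF \<open>cyc_shift N m k0 \<in> {1..N}\<close> Suc.IH] by simp
  qed
  then have "P (cyc_shift N ((k + N - k0) mod N) k0)" .
  then show ?thesis unfolding cyc_shift_offset[OF k0(1) k] .
qed

definition shift_edges :: "nat \<Rightarrow> nat \<Rightarrow> nat set set \<Rightarrow> nat set set" where
  "shift_edges N t E = (\<lambda>e. cyc_shift N t ` e) ` E"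

lemma cycle_edges_cyc_shift: "cycle_edges N (cyc_shift N t \<circ> \<pi>) = shift_edges N t (cycle_edges N \<pi>)"
  unfolding cycle_edges_def shift_edges_def by (simp add: image_image)

lemma shift_edges_add: "shift_edges N a (shift_edges N b E) = shift_edges N (a + b) E"
  unfolding shift_edges_def image_image by (simp add: cyc_shift_add)

lemma shift_edges_multiple:
  assumes E: "\<Union>E \<subseteq> {1..N}" and t: "t mod N = 0"
  shows "shift_edges N t E = E"
proof -
  have "cyc_shift N t ` e = id ` e" if "e \<in> E" for e
    by (rule image_cong[OF refl]) (use that E cyc_shift_multiple[OF _ t] in auto)
  then have "shift_edges N t E = id ` E"
    unfolding shift_edges_def by (intro image_cong[OF refl]) simp
  then show ?thesis by simp
qed

lemma Union_cycle_edges_subset: "\<pi> ` {1..N} \<subseteq> {1..N} \<Longrightarrow> \<Union>(cycle_edges N \<pi>) \<subseteq> {1..N}"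
  unfolding cycle_edges_def using cyc_next_in by auto

definition tour_adj :: "nat \<Rightarrow> (nat \<Rightarrow> nat) \<Rightarrow> nat \<Rightarrow> nat \<Rightarrow> bool" where
  "tour_adj N \<pi> x y \<longleftrightarrow> {x, y} \<in> cycle_edges N \<pi>"

lemma tour_adj_commute: "tour_adj N \<pi> x y = tour_adj N \<pi> y x"
  by (simp add: tour_adj_def insert_commute)

definition cyc_prev :: "nat \<Rightarrow> nat \<Rightarrow> nat" where
  "cyc_prev N k = (if k = 1 then N else k - 1)"

lemma cyc_prev_in: "k \<in> {1..N} \<Longrightarrow> cyc_prev N k \<in> {1..N}"
  by (auto simp: cyc_prev_def)

lemma cyc_next_cyc_prev: "k \<in> {1..N} \<Longrightarrow> cyc_next N (cyc_prev N k) = k"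
  by (auto simp: cyc_prev_def cyc_next_def)

lemma cyc_next_eq_iff_cyc_prev: "k \<in> {1..N} \<Longrightarrow> l \<in> {1..N} \<Longrightarrow> cyc_next N l = k \<longleftrightarrow> l = cyc_prev N k"
  by (auto simp: cyc_prev_def cyc_next_def)

lemma cyc_next_neq_cyc_prev: "3 \<le> N \<Longrightarrow> k \<in> {1..N} \<Longrightarrow> cyc_next N k \<noteq> cyc_prev N k"
  by (auto simp: cyc_prev_def cyc_next_def)

lemma tour_adj_iff:
  assumes bij: "bij_betw \<pi> {1..N} {1..N}" and k: "k \<in> {1..N}"
  shows "tour_adj N \<pi> (\<pi> k) y \<longleftrightarrow> y = \<pi> (cyc_next N k) \<or> y = \<pi> (cyc_prev N k)"
proof
  have inj: "inj_on \<pi> {1..N}" using bij by (simp add: bij_betw_def)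
  assume "tour_adj N \<pi> (\<pi> k) y"
  then obtain l where l: "l \<in> {1..N}" "{\<pi> k, y} = {\<pi> l, \<pi> (cyc_next N l)}"
    unfolding tour_adj_def cycle_edges_def by (rule imageE)
  then consider "\<pi> k = \<pi> l" "y = \<pi> (cyc_next N l)" | "\<pi> k = \<pi> (cyc_next N l)" "y = \<pi> l"
    unfolding doubleton_eq_iff by blast
  then show "y = \<pi> (cyc_next N k) \<or> y = \<pi> (cyc_prev N k)"
  proof cases
    case 1
    then have "l = k" using inj_onD[OF inj _ l(1) k] by simp
    then show ?thesis using 1 by simp
  next
    case 2
    then have "cyc_next N l = k" using inj_onD[OF inj _ cyc_next_in[OF l(1)] k] by simp
    then have "l = cyc_prev N k" using cyc_next_eq_iff_cyc_prev[OF k l(1)] by simp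
    then show ?thesis using 2 by simp
  qed
next
  assume "y = \<pi> (cyc_next N k) \<or> y = \<pi> (cyc_prev N k)"
  then show "tour_adj N \<pi> (\<pi> k) y"
  proof
    assume "y = \<pi> (cyc_next N k)"
    then have "{\<pi> k, y} = {\<pi> k, \<pi> (cyc_next N k)}" by simp
    then show ?thesis unfolding tour_adj_def cycle_edges_def by (rule image_eqI[OF _ k])
  next
    assume "y = \<pi> (cyc_prev N k)"
    then have "{\<pi> k, y} = {\<pi> (cyc_prev N k), \<pi> (cyc_next N (cyc_prev N k))}"
      unfolding cyc_next_cyc_prev[OF k] by (simp add: insert_commute)
    then show ?thesis unfolding tour_adj_def cycle_edges_def by (rule image_eqI[OF _ cyc_prev_in[OF k]])
  qed
qed

lemma tour_adj_cyc_shift: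
  assumes range: "\<pi> ` {1..N} \<subseteq> {1..N}" and a: "a \<in> {1..N}" and b: "b \<in> {1..N}"
  shows "tour_adj N (cyc_shift N t \<circ> \<pi>) (cyc_shift N t a) (cyc_shift N t b) = tour_adj N \<pi> a b"
proof -
  have "{a, b} \<in> Pow {1..N}" using a b by simp
  moreover have "cycle_edges N \<pi> \<subseteq> Pow {1..N}" using Union_cycle_edges_subset[OF range] by blast
  ultimately have "cyc_shift N t ` {a, b} \<in> image (cyc_shift N t) ` cycle_edges N \<pi>
      \<longleftrightarrow> {a, b} \<in> cycle_edges N \<pi>"
    by (rule inj_on_image_mem_iff[OF inj_on_image_Pow[OF inj_on_cyc_shift]])
  then show ?thesis unfolding tour_adj_def cycle_edges_cyc_shift shift_edges_def by simp
qed

definition zigzag_edges :: "nat \<Rightarrow> nat set set" where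
  "zigzag_edges h = {{1, 1 + h}, {h, 2 * h}}
     \<union> (\<lambda>g. {g, g + h + 1}) ` {1..h - 1} \<union> (\<lambda>g. {g + h, g + 1}) ` {1..h - 1}"

lemma zigzag_edges_memI:
  "{1, 1 + h} \<in> zigzag_edges h" "{h, 2 * h} \<in> zigzag_edges h"
  "1 \<le> g \<Longrightarrow> g < h \<Longrightarrow> {g, g + h + 1} \<in> zigzag_edges h"
  "1 \<le> g \<Longrightarrow> g < h \<Longrightarrow> {g + h, g + 1} \<in> zigzag_edges h"
  by (auto simp: zigzag_edges_def)

lemma finite_zigzag_edges: "finite (zigzag_edges h)"
  by (simp add: zigzag_edges_def)

lemma card_zigzag_edges: "1 \<le> h \<Longrightarrow> card (zigzag_edges h) \<le> 2 * h"
proof -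
  assume "1 \<le> h"
  have "card (zigzag_edges h) \<le> card {{1, 1 + h}, {h, 2 * h}} + card ((\<lambda>g. {g, g + h + 1}) ` {1..h - 1})
      + card ((\<lambda>g. {g + h, g + 1}) ` {1..h - 1})"
    unfolding zigzag_edges_def by (intro card_Un_le[THEN order_trans] add_right_mono card_Un_le)
  also have "\<dots> \<le> 2 + card {1..h - 1} + card {1..h - 1}"
    by (intro add_mono card_image_le) (auto simp: card_insert_if)
  finally show ?thesis using \<open>1 \<le> h\<close> by simp
qed

lemma sigma0_double: "sigma0 (2*h) i = (if i = 1 then 1 else if even i \<and> i \<le> h + 1 then h + 3 - i
      else if odd i \<and> i \<le> h + 1 then 2*h + 3 - i else if even i then i - h else i)"
  by (simp add: sigma0_def)

definition sigma0_inv :: "nat \<Rightarrow> nat \<Rightarrow> nat" where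
  "sigma0_inv h v = (if v = 1 then 1
     else if v \<le> h + 1 then (if even (v + h + 1) then h + 3 - v else v + h)
     else if even v then 2*h + 3 - v else v)"

lemma sigma0_in: "2 \<le> h \<Longrightarrow> i \<in> {1..2*h} \<Longrightarrow> sigma0 (2*h) i \<in> {1..2*h}"
  unfolding sigma0_double by (auto; presburger)

lemma sigma0_inv_sigma0: "2 \<le> h \<Longrightarrow> i \<in> {1..2*h} \<Longrightarrow> sigma0_inv h (sigma0 (2*h) i) = i"
  unfolding sigma0_double sigma0_inv_def by (auto; presburger)

lemma inj_on_sigma0: "2 \<le> h \<Longrightarrow> inj_on (sigma0 (2*h)) {1..2*h}"
  by (rule inj_on_inverseI[where g="sigma0_inv h"]) (rule sigma0_inv_sigma0)

lemma sigma0_edge_low_in_zigzag: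
  assumes h: "2 \<le> h" and i: "1 \<le> i" "i \<le> h + 1"
  shows "{cyc_prev (2*h) (sigma0 (2*h) i), cyc_prev (2*h) (sigma0 (2*h) (i + 1))} \<in> zigzag_edges h"
proof -
  let ?e = "{cyc_prev (2*h) (sigma0 (2*h) i), cyc_prev (2*h) (sigma0 (2*h) (i + 1))}"
  consider "i = 1" | "2 \<le> i \<and> i \<le> h \<and> even i" | "2 \<le> i \<and> i \<le> h \<and> odd i" | "i = h + 1"
    using i by linarith
  then show ?thesis
  proof cases
    case 1
    then have "?e = {h, 2 * h}"
      using h by (auto simp: sigma0_double cyc_prev_def)
    moreover have "{h, 2 * h} \<in> zigzag_edges h" using 1 h by (intro zigzag_edges_memI; auto)
    ultimately show ?thesis by simp
  next
    case 2
    then have "?e = {(h + 1 - i) + h, (h + 1 - i) + 1}"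
      using h by (auto simp: sigma0_double cyc_prev_def)
    moreover have "{(h + 1 - i) + h, (h + 1 - i) + 1} \<in> zigzag_edges h"
      using 2 h by (intro zigzag_edges_memI; auto)
    ultimately show ?thesis by simp
  next
    case 3
    then have "?e = {h + 1 - i, (h + 1 - i) + h + 1}"
      using h by (auto simp: sigma0_double cyc_prev_def)
    moreover have "{h + 1 - i, (h + 1 - i) + h + 1} \<in> zigzag_edges h"
      using 3 h by (intro zigzag_edges_memI; auto)
    ultimately show ?thesis by simp
  next
    case 4
    then have "?e = {1, 1 + h}"
      using h by (auto simp: sigma0_double cyc_prev_def)
    moreover have "{1, 1 + h} \<in> zigzag_edges h" using 4 h by (intro zigzag_edges_memI; auto)
    ultimately show ?thesis by simp
  qed
qed

lemma sigma0_edge_high_in_zigzag: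
  assumes h: "2 \<le> h" and i: "h + 2 \<le> i" "i \<le> 2 * h"
  shows "{cyc_prev (2*h) (sigma0 (2*h) i), cyc_prev (2*h) (sigma0 (2*h) (cyc_next (2*h) i))}
    \<in> zigzag_edges h"
proof -
  let ?e = "{cyc_prev (2*h) (sigma0 (2*h) i), cyc_prev (2*h) (sigma0 (2*h) (cyc_next (2*h) i))}"
  consider "i < 2 * h \<and> even i" | "i < 2 * h \<and> odd i" | "i = 2 * h" using i by linarith
  then show ?thesis
  proof cases
    case 1
    then have "?e = {i - h - 1, (i - h - 1) + h + 1}"
      using i h by (auto simp: sigma0_double cyc_prev_def cyc_next_def)
    moreover have "{i - h - 1, (i - h - 1) + h + 1} \<in> zigzag_edges h"
      using 1 h i by (intro zigzag_edges_memI; auto)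
    ultimately show ?thesis by simp
  next
    case 2
    then have "?e = {(i - h - 1) + h, (i - h - 1) + 1}"
      using i h by (auto simp: sigma0_double cyc_prev_def cyc_next_def)
    moreover have "{(i - h - 1) + h, (i - h - 1) + 1} \<in> zigzag_edges h"
      using 2 h i by (intro zigzag_edges_memI; auto)
    ultimately show ?thesis by simp
  next
    case 3
    then have "?e = {h - 1, (h - 1) + h + 1}"
      using h by (auto simp: sigma0_double cyc_prev_def cyc_next_def)
    moreover have "{h - 1, (h - 1) + h + 1} \<in> zigzag_edges h"
      using 3 h by (intro zigzag_edges_memI; auto)
    ultimately show ?thesis by simp
  qed
qed

definition exactly_two :: "bool \<Rightarrow> bool \<Rightarrow> bool \<Rightarrow> bool" where
  "exactly_two p q s \<longleftrightarrow> (p \<and> q \<and> \<not> s) \<or> (p \<and> \<not> q \<and> s) \<or> (\<not> p \<and> q \<and> s)"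

text \<open>A ladder with top vertices 1..h and bottom vertices 1..h: rung c joins top c and bottom c,
  up c joins top c and bottom c+1, down c joins bottom c and top c+1, except that up h joins top h
  and top 1 and down h joins bottom h and bottom 1. Every vertex meets exactly two of its three
  possible edges.\<close>
locale ladder =
  fixes h :: nat and up down rung :: "nat \<Rightarrow> bool"
  assumes two_le_h: "2 \<le> h"
    and top: "\<And>c. 2 \<le> c \<Longrightarrow> c \<le> h \<Longrightarrow> exactly_two (down (c - 1)) (rung c) (up c)"
    and top_1: "exactly_two (up h) (rung 1) (up 1)"
    and bottom: "\<And>c. 2 \<le> c \<Longrightarrow> c \<le> h \<Longrightarrow> exactly_two (up (c - 1)) (rung c) (down c)"
    and bottom_1: "exactly_two (down h) (rung 1) (down 1)"
begin

lemma up_eq_down_iff: "1 \<le> c \<Longrightarrow> c \<le> h \<Longrightarrow> (up c = down c) = (up 1 = down 1)"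
proof (induction c rule: nat_induct_at_least)
  case (Suc n) then show ?case
    using top[of "Suc n"] bottom[of "Suc n"] unfolding exactly_two_def by auto
qed simp

lemma up_const_if_twisted:
  assumes "\<And>c. 1 \<le> c \<Longrightarrow> c \<le> h \<Longrightarrow> up c \<noteq> down c"
  shows "1 \<le> c \<Longrightarrow> c \<le> h \<Longrightarrow> up c = up 1"
proof (induction c rule: nat_induct_at_least)
  case (Suc n)
  then show ?case using top[of "Suc n"] bottom[of "Suc n"] assms[of n] assms[of "Suc n"]
    unfolding exactly_two_def by auto
qed simp

lemma all_diagonals:
  assumes all: "\<And>c. 1 \<le> c \<Longrightarrow> c \<le> h \<Longrightarrow> up c \<or> down c"
  shows "1 \<le> c \<Longrightarrow> c \<le> h \<Longrightarrow> up c \<and> down c \<and> \<not> rung c"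
proof (cases "up 1 = down 1")
  case False
  then have twisted: "\<And>c. 1 \<le> c \<Longrightarrow> c \<le> h \<Longrightarrow> up c \<noteq> down c" using up_eq_down_iff by blast
  then have "up h = up 1" using up_const_if_twisted[of h] two_le_h by simp
  moreover have "down h \<noteq> up h" "down 1 \<noteq> up 1" using twisted two_le_h by auto
  ultimately show "up c \<and> down c \<and> \<not> rung c" using top_1 bottom_1 unfolding exactly_two_def by blast
next
  case True
  then have both: "up c \<and> down c" if "1 \<le> c" "c \<le> h" for c
    using up_eq_down_iff[OF that] all[OF that] by auto
  assume c: "1 \<le> c" "c \<le> h"
  show "up c \<and> down c \<and> \<not> rung c"
  proof (cases "c = 1")
    case True then show ?thesis
      using top_1 both[of 1] both[of h] two_le_h unfolding exactly_two_def by auto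
  next
    case False
    then show ?thesis using top[of c] both[of c] both[of "c - 1"] c unfolding exactly_two_def by auto
  qed
qed

lemma gap_at_h:
  assumes gap: "\<not> up h" "\<not> down h" and all: "\<And>c. 1 \<le> c \<Longrightarrow> c \<le> h - 1 \<Longrightarrow> up c \<or> down c"
  shows "1 \<le> c \<Longrightarrow> c \<le> h - 1 \<Longrightarrow> up c \<and> down c \<and> (rung c \<longleftrightarrow> c = 1)"
proof (induction c rule: nat_induct_at_least)
  case base then show ?case using top_1 bottom_1 gap unfolding exactly_two_def by auto
next
  case (Suc n)
  then have "2 \<le> Suc n" "Suc n \<le> h" "up n \<and> down n" by auto
  then show ?case using Suc.prems all[of "Suc n"] top[of "Suc n"] bottom[of "Suc n"]
    unfolding exactly_two_def by auto
qed

lemma rung_h_if_gap_at_h: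
  assumes gap: "\<not> up h" "\<not> down h" and all: "\<And>c. 1 \<le> c \<Longrightarrow> c \<le> h - 1 \<Longrightarrow> up c \<or> down c"
  shows "rung h"
  using gap_at_h[OF gap all, of "h - 1"] top[of h] two_le_h gap unfolding exactly_two_def by auto

end

locale even_tour =
  fixes N h :: nat
  assumes N_eq: "N = 2 * h" and two_le_h: "2 \<le> h"
begin

lemma N_pos: "0 < N" and three_le_N: "3 \<le> N" and h_less_N: "h < N"
  using N_eq two_le_h by auto

lemma shift_pred_half_top: "1 \<le> c \<Longrightarrow> c \<le> h \<Longrightarrow> cyc_shift N (h - 1) c = c + h - 1"
  and shift_half_top: "1 \<le> c \<Longrightarrow> c \<le> h \<Longrightarrow> cyc_shift N h c = c + h"
  and shift_succ_half_top: "1 \<le> c \<Longrightarrow> c < h \<Longrightarrow> cyc_shift N (h + 1) c = c + h + 1"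
  and shift_succ_half_h: "cyc_shift N (h + 1) h = 1"
  and shift_pred_half_bottom: "2 \<le> c \<Longrightarrow> c \<le> h \<Longrightarrow> cyc_shift N (h - 1) (c + h) = c - 1"
  and shift_pred_half_bottom_1: "cyc_shift N (h - 1) (1 + h) = 2 * h"
  and shift_half_bottom: "1 \<le> c \<Longrightarrow> c \<le> h \<Longrightarrow> cyc_shift N h (c + h) = c"
  and shift_succ_half_bottom: "1 \<le> c \<Longrightarrow> c \<le> h \<Longrightarrow> cyc_shift N (h + 1) (c + h) = c + 1"
  using N_eq two_le_h by (auto simp: cyc_shift_eq)

text \<open>An edge inside {1..h-1} would confine the starts of all ascending (or the ends of all
  descending) edges below h, leaving fewer than N edges.\<close>
lemma stable_edge_max_ge:
  assumes bij: "bij_betw \<pi> {1..N} {1..N}" and stable: "two_opt_stable N \<pi>" and k0: "k0 \<in> {1..N}"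
  shows "h \<le> max (\<pi> k0) (\<pi> (cyc_next N k0))"
proof (rule ccontr)
  assume "\<not> h \<le> max (\<pi> k0) (\<pi> (cyc_next N k0))"
  then have low: "\<pi> k0 < h" "\<pi> (cyc_next N k0) < h" by auto
  define Asc where "Asc = {k \<in> {1..N}. \<pi> k < \<pi> (cyc_next N k)}"
  define Desc where "Desc = {k \<in> {1..N}. \<pi> (cyc_next N k) < \<pi> k}"
  have "\<pi> k \<noteq> \<pi> (cyc_next N k)" if "k \<in> {1..N}" for k
    using inj_onD[OF bij_betw_imp_inj_on[OF bij] _ that cyc_next_in[OF that]] cyc_next_neq[OF _ that]
      three_le_N by auto
  then have "\<pi> k < \<pi> (cyc_next N k) \<or> \<pi> (cyc_next N k) < \<pi> k" if "k \<in> {1..N}" for k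
    using that by (meson nat_neq_iff)
  then have split: "Asc \<union> Desc = {1..N}" unfolding Asc_def Desc_def by blast
  moreover have "Asc \<inter> Desc = {}" unfolding Asc_def Desc_def by auto
  ultimately have card: "card Asc + card Desc = N"
    using card_Un_disjoint[of Asc Desc] by (simp add: Asc_def Desc_def)
  have "h \<in> {1..N}" using two_le_h N_eq by simp
  then obtain kh kh' where kh: "kh \<in> {1..N}" "\<pi> kh = h" and kh': "kh' \<in> {1..N}" "\<pi> (cyc_next N kh') = h"
    using bij_betw_imp_surj_on[OF bij] bij_betw_imp_surj_on[OF bij_betw_trans[OF bij_betw_cyc_next bij]]
    by (metis imageE comp_apply)
  show False
  proof (cases "k0 \<in> Asc")
    case True
    then have "kh \<notin> Asc"
      using kh low(2) stable_ascending_edges_overlap[OF stable _ k0, of kh] by (auto simp: Asc_def)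
    then have "kh \<in> Desc" using kh(1) split by blast
    then have "card Desc \<le> h" using stable_descending_card_le[OF bij stable kh(1), of h] kh(2)
      by (simp add: Desc_def)
    moreover have "card Asc \<le> h - 1"
      using stable_ascending_card_le[OF bij stable k0] True low(2) by (simp add: Asc_def)
    ultimately show False using card two_le_h N_eq by linarith
  next
    case False
    then have "k0 \<in> Desc" using k0 split by blast
    then have "kh' \<notin> Desc"
      using kh' low(1) stable_descending_edges_overlap[OF stable _ k0, of kh'] by (auto simp: Desc_def)
    then have "kh' \<in> Asc" using kh'(1) split by blast
    then have "card Asc \<le> h" using stable_ascending_card_le[OF bij stable kh'(1), of h] kh'(2)
      by (simp add: Asc_def)
    moreover have "card Desc \<le> h - 1"
      using stable_descending_card_le[OF bij stable k0] \<open>k0 \<in> Desc\<close> low(1) by (simp add: Desc_def)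
    ultimately show False using card two_le_h N_eq by linarith
  qed
qed

text \<open>Rotating either endpoint of the edge to vertex 1 and applying stable_edge_max_ge bounds the
  cyclic distance between the endpoints from below in both directions.\<close>
lemma stable_edge_offset:
  assumes bij: "bij_betw \<pi> {1..N} {1..N}" and stable: "two_opt_stable N \<pi>" and k: "k \<in> {1..N}"
  shows "(\<pi> (cyc_next N k) + N - \<pi> k) mod N \<in> {h - 1, h, h + 1}"
proof -
  define x where "x = \<pi> k"
  define y where "y = \<pi> (cyc_next N k)"
  have x: "x \<in> {1..N}" and y: "y \<in> {1..N}"
    using bij_betwE[OF bij] k cyc_next_in[OF k] by (auto simp: x_def y_def)
  have "x \<noteq> y" unfolding x_def y_def
    using bij_betw_imp_inj_on[OF bij] k cyc_next_in[OF k] cyc_next_neq[of N k] three_le_N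
    by (auto dest: inj_onD)
  have "h \<le> max (cyc_shift N (N + 1 - z) x) (cyc_shift N (N + 1 - z) y)" for z
    using stable_edge_max_ge[OF bij_betw_trans[OF bij bij_betw_cyc_shift[OF N_pos]]
      two_opt_stable_cyc_shift[OF N_pos bij stable] k] by (simp add: x_def y_def)
  from this[of x] this[of y] have "h - 1 \<le> (y + N - x) mod N" "h - 1 \<le> (x + N - y) mod N"
    using cyc_shift_to_1 x y by auto
  moreover have "(y + N - x) mod N + (x + N - y) mod N = N" by (rule cyc_offsets_sum[OF x y \<open>x \<noteq> y\<close>])
  moreover have "a \<in> {h - 1, h, h + 1}" if "h - 1 \<le> a" "h - 1 \<le> b" "a + b = N" for a b :: nat
    using that N_eq two_le_h by (simp only: insert_iff empty_iff) presburger
  ultimately show ?thesis unfolding x_def[symmetric] y_def[symmetric] by blast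
qed

lemma stable_tour_adj_cases:
  assumes bij: "bij_betw \<pi> {1..N} {1..N}" and stable: "two_opt_stable N \<pi>"
    and x: "x \<in> {1..N}" and adj: "tour_adj N \<pi> x y"
  shows "y = cyc_shift N (h - 1) x \<or> y = cyc_shift N h x \<or> y = cyc_shift N (h + 1) x"
proof -
  obtain k where k: "k \<in> {1..N}" "x = \<pi> k"
    using x bij_betw_imp_surj_on[OF bij] by (metis imageE)
  have in_range: "\<pi> j \<in> {1..N}" if "j \<in> {1..N}" for j using bij_betwE[OF bij] that by blast
  from adj consider "y = \<pi> (cyc_next N k)" | "y = \<pi> (cyc_prev N k)"
    using tour_adj_iff[OF bij k(1)] k(2) by blast
  then show ?thesis
  proof cases
    case 1
    then have "(y + N - x) mod N \<in> {h - 1, h, h + 1}"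
      using stable_edge_offset[OF bij stable k(1)] k by simp
    moreover have "cyc_shift N ((y + N - x) mod N) x = y"
      using cyc_shift_offset[OF x] in_range cyc_next_in k(1) 1 by blast
    ultimately show ?thesis by auto
  next
    case 2
    have prev: "cyc_prev N k \<in> {1..N}" using cyc_prev_in[OF k(1)] .
    then have y: "y \<in> {1..N}" using 2 in_range by blast
    define d where "d = (x + N - y) mod N"
    have d: "d \<in> {h - 1, h, h + 1}"
      using stable_edge_offset[OF bij stable prev] 2 k cyc_next_cyc_prev[OF k(1)] by (simp add: d_def)
    then have "d < N" using N_eq two_le_h by auto
    have "x = cyc_shift N d y" using cyc_shift_offset[OF y x] by (simp add: d_def)
    then have "y = cyc_shift N (N - d) x" using cyc_shift_inverse[OF y, of d] \<open>d < N\<close> by simp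
    moreover have "N - d \<in> {h + 1, h, h - 1}" using d N_eq two_le_h by auto
    ultimately show ?thesis by auto
  qed
qed

lemma stable_tour_adj_top:
  assumes bij: "bij_betw \<pi> {1..N} {1..N}" and stable: "two_opt_stable N \<pi>"
    and c: "1 \<le> c" "c \<le> h" and adj: "tour_adj N \<pi> c y"
  shows "y = c + h - 1 \<or> y = c + h \<or> (c < h \<and> y = c + h + 1) \<or> (c = h \<and> y = 1)"
proof -
  have "c \<in> {1..N}" using c N_eq by auto
  from stable_tour_adj_cases[OF bij stable this adj] show ?thesis
    using shift_pred_half_top[OF c] shift_half_top[OF c] shift_succ_half_top[of c] shift_succ_half_h c
    by (cases "c = h") auto
qed

lemma stable_tour_adj_bottom:
  assumes bij: "bij_betw \<pi> {1..N} {1..N}" and stable: "two_opt_stable N \<pi>"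
    and c: "1 \<le> c" "c \<le> h" and adj: "tour_adj N \<pi> (c + h) y"
  shows "(1 < c \<and> y = c - 1) \<or> (c = 1 \<and> y = 2 * h) \<or> y = c \<or> y = c + 1"
proof -
  have "c + h \<in> {1..N}" using c N_eq by auto
  from stable_tour_adj_cases[OF bij stable this adj] show ?thesis
    using shift_pred_half_bottom[of c] shift_pred_half_bottom_1 shift_half_bottom[OF c]
      shift_succ_half_bottom[OF c] c by (cases "c = 1") auto
qed

lemma stable_tour_exactly_two:
  assumes bij: "bij_betw \<pi> {1..N} {1..N}" and stable: "two_opt_stable N \<pi>" and x: "x \<in> {1..N}"
  shows "exactly_two (tour_adj N \<pi> x (cyc_shift N (h - 1) x)) (tour_adj N \<pi> x (cyc_shift N h x))
    (tour_adj N \<pi> x (cyc_shift N (h + 1) x))"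
proof -
  obtain k where k: "k \<in> {1..N}" "x = \<pi> k"
    using x bij_betw_imp_surj_on[OF bij] by (metis imageE)
  define s1 where "s1 = \<pi> (cyc_next N k)"
  define s2 where "s2 = \<pi> (cyc_prev N k)"
  have "s1 \<noteq> s2"
    using inj_onD[OF bij_betw_imp_inj_on[OF bij] _ cyc_next_in[OF k(1)] cyc_prev_in[OF k(1)]]
      cyc_next_neq_cyc_prev[OF three_le_N k(1)] by (auto simp: s1_def s2_def)
  have adj: "tour_adj N \<pi> x z \<longleftrightarrow> z = s1 \<or> z = s2" for z
    using tour_adj_iff[OF bij k(1)] k(2) by (simp add: s1_def s2_def)
  have "h - 1 < N" "h < N" "h + 1 < N" using N_eq two_le_h by auto
  then have "cyc_shift N (h - 1) x \<noteq> cyc_shift N h x" "cyc_shift N (h - 1) x \<noteq> cyc_shift N (h + 1) x"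
    "cyc_shift N h x \<noteq> cyc_shift N (h + 1) x"
    using cyc_shift_offset_inj[of N _ x] two_le_h by fastforce+
  then show ?thesis
    using stable_tour_adj_cases[OF bij stable x] adj \<open>s1 \<noteq> s2\<close> unfolding exactly_two_def by metis
qed

definition tour_up :: "(nat \<Rightarrow> nat) \<Rightarrow> nat \<Rightarrow> bool" where
  "tour_up \<pi> c \<longleftrightarrow> tour_adj N \<pi> c (cyc_shift N (h + 1) c)"

definition tour_down :: "(nat \<Rightarrow> nat) \<Rightarrow> nat \<Rightarrow> bool" where
  "tour_down \<pi> c \<longleftrightarrow> tour_adj N \<pi> (cyc_shift N h c) (cyc_shift N 1 c)"

definition tour_rung :: "(nat \<Rightarrow> nat) \<Rightarrow> nat \<Rightarrow> bool" where
  "tour_rung \<pi> c \<longleftrightarrow> tour_adj N \<pi> c (cyc_shift N h c)"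

lemma stable_tour_ladder:
  assumes bij: "bij_betw \<pi> {1..N} {1..N}" and stable: "two_opt_stable N \<pi>"
  shows "ladder h (tour_up \<pi>) (tour_down \<pi>) (tour_rung \<pi>)"
proof
  note exactly_two = stable_tour_exactly_two[OF bij stable]
  show "2 \<le> h" by (rule two_le_h)
  fix c assume c: "2 \<le> c" "c \<le> h"
  have "c < N" using c N_eq by simp
  have "cyc_shift N (h - 1) c = (c - 1) + h" "cyc_shift N h (c - 1) = (c - 1) + h"
    "cyc_shift N 1 (c - 1) = c"
    using c \<open>c < N\<close> shift_pred_half_top[of c] shift_half_top[of "c - 1"] cyc_shift_1_less[of "c - 1" N]
      by auto
  then show "exactly_two (tour_down \<pi> (c - 1)) (tour_rung \<pi> c) (tour_up \<pi> c)"
    using exactly_two[of c] c \<open>c < N\<close> unfolding tour_up_def tour_down_def tour_rung_def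
    by (simp add: tour_adj_commute)
  have "c + h \<in> {1..N}" using c N_eq by simp
  have "cyc_shift N (h - 1) (c + h) = c - 1" "cyc_shift N (h + 1) (c - 1) = c + h"
    "cyc_shift N h (c + h) = c" "cyc_shift N h c = c + h" "cyc_shift N (h + 1) (c + h) = c + 1"
    "cyc_shift N 1 c = c + 1"
    using c \<open>c < N\<close> shift_pred_half_bottom[of c] shift_succ_half_top[of "c - 1"] shift_half_bottom[of c]
      shift_half_top[of c] shift_succ_half_bottom[of c] cyc_shift_1_less[of c N] by auto
  then show "exactly_two (tour_up \<pi> (c - 1)) (tour_rung \<pi> c) (tour_down \<pi> c)"
    using exactly_two[OF \<open>c + h \<in> {1..N}\<close>] unfolding tour_up_def tour_down_def tour_rung_def
    by (simp add: tour_adj_commute)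
next
  note exactly_two = stable_tour_exactly_two[OF bij stable]
  have "1 \<in> {1..N}" "cyc_shift N (h - 1) 1 = h"
    using N_pos shift_pred_half_top[of 1] two_le_h by auto
  then show "exactly_two (tour_up \<pi> h) (tour_rung \<pi> 1) (tour_up \<pi> 1)"
    using exactly_two[OF \<open>1 \<in> {1..N}\<close>] shift_succ_half_h unfolding tour_up_def tour_rung_def
    by (simp add: tour_adj_commute)
  have "1 + h \<in> {1..N}" using N_eq two_le_h by simp
  have "cyc_shift N h h = 2 * h" "cyc_shift N 1 h = 1 + h" "cyc_shift N h (1 + h) = 1"
    "cyc_shift N (h + 1) (1 + h) = 2" "cyc_shift N h 1 = 1 + h" "cyc_shift N 1 1 = 2"
    using two_le_h h_less_N shift_half_top[of h] cyc_shift_1_less[of h N] shift_half_bottom[of 1]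
      shift_succ_half_bottom[of 1] shift_half_top[of 1] cyc_shift_1_less[of 1 N] by auto
  then show "exactly_two (tour_down \<pi> h) (tour_rung \<pi> 1) (tour_down \<pi> 1)"
    using exactly_two[OF \<open>1 + h \<in> {1..N}\<close>] shift_pred_half_bottom_1
    unfolding tour_down_def tour_rung_def by (simp add: tour_adj_commute)
qed

text \<open>A step by h+1 followed by a step by h-1, or vice versa, would return to the start.\<close>
lemma tour_steps_one_direction:
  assumes bij: "bij_betw \<pi> {1..N} {1..N}"
    and steps: "\<And>k. k \<in> {1..N} \<Longrightarrow>
      \<pi> (cyc_next N k) = cyc_shift N (h - 1) (\<pi> k) \<or> \<pi> (cyc_next N k) = cyc_shift N (h + 1) (\<pi> k)"
    and k: "k \<in> {1..N}"
  shows "(\<pi> (cyc_next N k) = cyc_shift N (h + 1) (\<pi> k))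
    = (\<pi> (cyc_next N 1) = cyc_shift N (h + 1) (\<pi> 1))"
proof -
  define upward where "upward k \<longleftrightarrow> \<pi> (cyc_next N k) = cyc_shift N (h + 1) (\<pi> k)" for k
  have in_range: "\<pi> j \<in> {1..N}" if "j \<in> {1..N}" for j using bij_betwE[OF bij] that by blast
  have shifts_cancel: "cyc_shift N (h - 1) (cyc_shift N (h + 1) x) = x"
    "cyc_shift N (h + 1) (cyc_shift N (h - 1) x) = x" if "x \<in> {1..N}" for x
  proof -
    have sums: "h - 1 + (h + 1) = N" "h + 1 + (h - 1) = N" using N_eq two_le_h by auto
    show "cyc_shift N (h - 1) (cyc_shift N (h + 1) x) = x"
      unfolding cyc_shift_add sums(1) by (rule cyc_shift_multiple[OF that]) simp
    show "cyc_shift N (h + 1) (cyc_shift N (h - 1) x) = x"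
      unfolding cyc_shift_add sums(2) by (rule cyc_shift_multiple[OF that]) simp
  qed
  have "h - 1 < N" "h + 1 < N" using N_eq two_le_h by auto
  then have distinct_steps: "cyc_shift N (h - 1) y \<noteq> cyc_shift N (h + 1) y" for y
    using cyc_shift_offset_inj[of N "h - 1" y "h + 1"] two_le_h by auto
  have "upward (cyc_next N l) = upward l" if l: "l \<in> {1..N}" for l
  proof -
    have l1: "cyc_next N l \<in> {1..N}" using cyc_next_in[OF l] .
    have no_return: "\<pi> (cyc_next N (cyc_next N l)) \<noteq> \<pi> l"
      using inj_onD[OF bij_betw_imp_inj_on[OF bij] _ cyc_next_in[OF l1] l]
        cyc_next_cyc_next_neq[OF three_le_N l] by auto
    show ?thesis
    proof (cases "upward l")
      case True
      then have "cyc_shift N (h - 1) (\<pi> (cyc_next N l)) = \<pi> l"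
        using shifts_cancel(1)[OF in_range[OF l]] by (simp add: upward_def)
      then show ?thesis using steps[OF l1] no_return True by (auto simp: upward_def)
    next
      case False
      then have "cyc_shift N (h + 1) (\<pi> (cyc_next N l)) = \<pi> l"
        using steps[OF l] shifts_cancel(2)[OF in_range[OF l]] by (auto simp: upward_def)
      then have "\<pi> (cyc_next N (cyc_next N l)) = cyc_shift N (h - 1) (\<pi> (cyc_next N l))"
        using steps[OF l1] no_return by auto
      then show ?thesis using False distinct_steps by (auto simp: upward_def)
    qed
  qed
  moreover have "1 \<in> {1..N}" using N_pos by simp
  ultimately have "upward k = upward 1"
    by (intro cyc_next_induct[where P = "\<lambda>k. upward k = upward 1", OF _ _ _ k]) auto
  then show ?thesis by (simp add: upward_def)
qed

text \<open>Without rungs the tour keeps one direction throughout; then the edges at the vertices 1 and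
  h+1 (or 2 and h+2) are nested and admit an improving 2-opt move.\<close>
lemma stable_tour_not_all_diagonals:
  assumes bij: "bij_betw \<pi> {1..N} {1..N}" and stable: "two_opt_stable N \<pi>"
    and all: "\<And>c. 1 \<le> c \<Longrightarrow> c \<le> h \<Longrightarrow> tour_up \<pi> c \<and> tour_down \<pi> c \<and> \<not> tour_rung \<pi> c"
  shows False
proof -
  have in_range: "\<pi> j \<in> {1..N}" if "j \<in> {1..N}" for j using bij_betwE[OF bij] that by blast
  have no_rung: "\<not> tour_adj N \<pi> x (cyc_shift N h x)" if x: "x \<in> {1..N}" for x
  proof (cases "x \<le> h")
    case True
    then show ?thesis using all[of x] x by (auto simp: tour_rung_def)
  next
    case False
    then obtain c where c: "1 \<le> c" "c \<le> h" "x = c + h" using x N_eq by (auto intro: that[of "x - h"])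
    then have "cyc_shift N h x = c" "cyc_shift N h c = x" using shift_half_bottom shift_half_top by auto
    then show ?thesis using all[OF c(1,2)] by (auto simp: tour_rung_def tour_adj_commute)
  qed
  have steps: "\<pi> (cyc_next N k) = cyc_shift N (h - 1) (\<pi> k)
      \<or> \<pi> (cyc_next N k) = cyc_shift N (h + 1) (\<pi> k)"
    if k: "k \<in> {1..N}" for k
  proof -
    have adj: "tour_adj N \<pi> (\<pi> k) (\<pi> (cyc_next N k))" using tour_adj_iff[OF bij k] by simp
    then show ?thesis
      using no_rung[OF in_range[OF k]] stable_tour_adj_cases[OF bij stable in_range[OF k] adj]
      by auto
  qed
  have one_direction:
    "(\<pi> (cyc_next N k) = cyc_shift N (h + 1) (\<pi> k)) = (\<pi> (cyc_next N 1) = cyc_shift N (h + 1) (\<pi> 1))"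
    if "k \<in> {1..N}" for k
    by (rule tour_steps_one_direction[OF bij _ that]) (rule steps)
  have nested: False if "k1 \<in> {1..N}" "k2 \<in> {1..N}" "\<pi> k1 = a" "\<pi> (cyc_next N k1) = b"
    "\<pi> k2 = c" "\<pi> (cyc_next N k2) = d" "distinct [a, b, c, d]"
    "\<not> crossing a b c d" "crossing a c b d" for k1 k2 a b c d
    using two_opt_stableD[OF stable that(1,2)] that(3-) by simp
  have v: "1 \<in> {1..N}" "h + 1 \<in> {1..N}" "2 \<in> {1..N}" "h + 2 \<in> {1..N}" using N_eq two_le_h by auto
  show False
  proof (cases "\<pi> (cyc_next N 1) = cyc_shift N (h + 1) (\<pi> 1)")
    case True
    obtain k1 k2 where k1: "k1 \<in> {1..N}" "\<pi> k1 = h + 1" and k2: "k2 \<in> {1..N}" "\<pi> k2 = 1"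
      using v(1,2) bij_betw_imp_surj_on[OF bij] by (metis imageE)
    have "\<pi> (cyc_next N k1) = 2" "\<pi> (cyc_next N k2) = h + 2"
      using one_direction[OF k1(1)] one_direction[OF k2(1)] True k1 k2
        shift_succ_half_bottom[of 1] shift_succ_half_top[of 1] two_le_h by (auto simp: add.commute)
    then show False using nested[of k1 k2 "h + 1" 2 1 "h + 2"] k1 k2 two_le_h
      by (simp add: crossing_def between_def)
  next
    case False
    obtain k1 k2 where k1: "k1 \<in> {1..N}" "\<pi> k1 = 2" and k2: "k2 \<in> {1..N}" "\<pi> k2 = h + 2"
      using v(3,4) bij_betw_imp_surj_on[OF bij] by (metis imageE)
    have "\<pi> (cyc_next N k1) = h + 1" "\<pi> (cyc_next N k2) = 1"
      using one_direction[OF k1(1)] one_direction[OF k2(1)] False steps[OF k1(1)] steps[OF k2(1)] k1 k2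
        shift_pred_half_top[of 2] shift_pred_half_bottom[of 2] two_le_h by (auto simp: add.commute)
    then show False using nested[of k1 k2 2 "h + 1" "h + 2" 1] k1 k2 two_le_h
      by (simp add: crossing_def between_def)
  qed
qed

lemma tour_up_eq: "1 \<le> g \<Longrightarrow> g < h \<Longrightarrow> tour_up \<pi> g = tour_adj N \<pi> g (g + h + 1)"
  and tour_up_h: "tour_up \<pi> h = tour_adj N \<pi> 1 h"
  and tour_down_eq: "1 \<le> g \<Longrightarrow> g \<le> h \<Longrightarrow> tour_down \<pi> g = tour_adj N \<pi> (g + h) (g + 1)"
  and tour_rung_eq: "1 \<le> g \<Longrightarrow> g \<le> h \<Longrightarrow> tour_rung \<pi> g = tour_adj N \<pi> g (g + h)"
  using shift_succ_half_top shift_succ_half_h shift_half_top cyc_shift_1_less[of g N] h_less_N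
  by (auto simp: tour_up_def tour_down_def tour_rung_def tour_adj_commute)

text \<open>With both diagonals missing at h and at g, the vertices 1..g and h+1..h+g are closed under
  tour steps, yet the tour must reach h.\<close>
lemma stable_tour_single_gap:
  assumes bij: "bij_betw \<pi> {1..N} {1..N}" and stable: "two_opt_stable N \<pi>"
    and gap_h: "\<not> tour_up \<pi> h" "\<not> tour_down \<pi> h"
    and g: "1 \<le> g" "g \<le> h - 1" and gap_g: "\<not> tour_up \<pi> g" "\<not> tour_down \<pi> g"
  shows False
proof -
  define S where "S = {1..g} \<union> {h<..g + h}"
  have no_h_edges: "\<not> tour_adj N \<pi> 1 h" "\<not> tour_adj N \<pi> (1 + h) (2 * h)"
    using gap_h tour_up_h tour_down_eq[of h] two_le_h by (auto simp: tour_adj_commute mult_2)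
  have no_g_edges: "\<not> tour_adj N \<pi> g (g + h + 1)" "\<not> tour_adj N \<pi> (g + h) (g + 1)"
    using gap_g tour_up_eq[of g] tour_down_eq[of g] g two_le_h by auto
  have closed: "\<pi> (cyc_next N k) \<in> S" if k: "k \<in> {1..N}" and "\<pi> k \<in> S" for k
  proof -
    have adj: "tour_adj N \<pi> (\<pi> k) (\<pi> (cyc_next N k))" using tour_adj_iff[OF bij k] by simp
    show ?thesis
    proof (cases "\<pi> k \<le> g")
      case True
      then have x: "1 \<le> \<pi> k" "\<pi> k \<le> h" "\<pi> k < h" using \<open>\<pi> k \<in> S\<close> g by (auto simp: S_def)
      have "\<pi> k = 1 \<longrightarrow> \<pi> (cyc_next N k) \<noteq> h" "\<pi> k = g \<longrightarrow> \<pi> (cyc_next N k) \<noteq> g + h + 1"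
        using adj no_h_edges no_g_edges by auto
      then show ?thesis
        using stable_tour_adj_top[OF bij stable x(1,2) adj] True x g by (auto simp: S_def)
    next
      case False
      then obtain c where c: "1 \<le> c" "c \<le> g" "\<pi> k = c + h"
        using \<open>\<pi> k \<in> S\<close> by (auto simp: S_def intro: that[of "\<pi> k - h"])
      have "c = 1 \<longrightarrow> \<pi> (cyc_next N k) \<noteq> 2 * h" "c = g \<longrightarrow> \<pi> (cyc_next N k) \<noteq> g + 1"
        using adj no_h_edges no_g_edges c(3) by (auto simp: add.commute)
      moreover have "c \<le> h" using c g by simp
      ultimately show ?thesis using stable_tour_adj_bottom[OF bij stable c(1) _ adj[unfolded c(3)]] c g
        by (auto simp: S_def)
    qed
  qed
  have "1 \<in> {1..N}" "h \<in> {1..N}" using N_eq two_le_h by auto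
  then obtain k1 kh where k1: "k1 \<in> {1..N}" "\<pi> k1 = 1" and kh: "kh \<in> {1..N}" "\<pi> kh = h"
    using bij_betw_imp_surj_on[OF bij] by (metis imageE)
  have "\<pi> k1 \<in> S" using k1 g by (simp add: S_def)
  then have "\<pi> kh \<in> S" using cyc_next_induct[OF k1(1), of "\<lambda>k. \<pi> k \<in> S"] closed kh(1) by blast
  then show False using kh g by (auto simp: S_def)
qed

lemma stable_tour_edge_in_zigzag:
  assumes bij: "bij_betw \<pi> {1..N} {1..N}" and stable: "two_opt_stable N \<pi>"
    and gap_h: "\<not> tour_up \<pi> h" "\<not> tour_down \<pi> h"
    and rungs: "\<And>c. 1 \<le> c \<Longrightarrow> c \<le> h \<Longrightarrow> tour_rung \<pi> c \<Longrightarrow> c = 1 \<or> c = h"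
    and k: "k \<in> {1..N}"
  shows "{\<pi> k, \<pi> (cyc_next N k)} \<in> zigzag_edges h"
proof -
  define x y where "x = \<pi> k" and "y = \<pi> (cyc_next N k)"
  have x: "x \<in> {1..N}" using bij_betwE[OF bij] k by (auto simp: x_def)
  have adj: "tour_adj N \<pi> x y" using tour_adj_iff[OF bij k] by (simp add: x_def y_def)
  have no_h_edges: "\<not> tour_adj N \<pi> 1 h" "\<not> tour_adj N \<pi> (h + h) (h + 1)"
    using gap_h tour_up_h tour_down_eq[of h] two_le_h by auto
  have rung_ends: "c = 1 \<or> c = h" if "1 \<le> c" "c \<le> h" "tour_adj N \<pi> c (c + h)" for c
    using rungs[OF that(1,2)] tour_rung_eq[OF that(1,2)] that(3) by simp
  show ?thesis unfolding x_def[symmetric] y_def[symmetric]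
  proof (cases "x \<le> h")
    case True
    then have c: "1 \<le> x" "x \<le> h" using x by auto
    have "x = 1 \<longrightarrow> y \<noteq> h" "x = h \<longrightarrow> y \<noteq> 1" "y = x + h \<longrightarrow> x = 1 \<or> x = h"
      using adj no_h_edges rung_ends[OF c] by (auto simp: tour_adj_commute)
    then show "{x, y} \<in> zigzag_edges h" using stable_tour_adj_top[OF bij stable c adj] c
      zigzag_edges_memI(1,2)[of h] zigzag_edges_memI(3)[of x h] zigzag_edges_memI(4)[of "x - 1" h]
      by (auto simp: insert_commute mult_2)
  next
    case False
    then obtain c where c: "1 \<le> c" "c \<le> h" "x = c + h" using x N_eq by (auto intro: that[of "x - h"])
    have "c = 1 \<longrightarrow> y \<noteq> 2 * h" "y = c \<longrightarrow> c = 1 \<or> c = h"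
      using adj no_h_edges rung_ends[OF c(1,2)] c by (auto simp: tour_adj_commute mult_2 add.commute)
    moreover have "y = c + 1 \<longrightarrow> c < h"
    proof
      assume "y = c + 1"
      then have "tour_adj N \<pi> (c + h) (c + 1)" using adj c(3) by simp
      then show "c < h" using no_h_edges(2) c(2) by (cases "c = h") auto
    qed
    ultimately show "{x, y} \<in> zigzag_edges h"
      using stable_tour_adj_bottom[OF bij stable c(1,2) adj[unfolded c(3)]] c
      zigzag_edges_memI(1,2)[of h] zigzag_edges_memI(3)[of "c - 1" h] zigzag_edges_memI(4)[of c h]
      by (auto simp: insert_commute mult_2)
  qed
qed

lemma stable_tour_edges_eq_zigzag:
  assumes bij: "bij_betw \<pi> {1..N} {1..N}" and stable: "two_opt_stable N \<pi>"
    and gap_h: "\<not> tour_up \<pi> h" "\<not> tour_down \<pi> h"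
  shows "cycle_edges N \<pi> = zigzag_edges h"
proof -
  interpret ladder h "tour_up \<pi>" "tour_down \<pi>" "tour_rung \<pi>" by (rule stable_tour_ladder[OF bij stable])
  have diagonal: "tour_up \<pi> g \<or> tour_down \<pi> g" if "1 \<le> g" "g \<le> h - 1" for g
    using stable_tour_single_gap[OF bij stable gap_h that] by blast
  have "c = 1 \<or> c = h" if "1 \<le> c" "c \<le> h" "tour_rung \<pi> c" for c
    using gap_at_h[OF gap_h diagonal, of c] that by (cases "c = h") auto
  then have "cycle_edges N \<pi> \<subseteq> zigzag_edges h"
    using stable_tour_edge_in_zigzag[OF bij stable gap_h] by (auto simp: cycle_edges_def)
  moreover have "card (cycle_edges N \<pi>) = N"
    using card_cycle_edges[OF bij_betw_imp_inj_on[OF bij] three_le_N] .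
  ultimately show ?thesis
    using card_zigzag_edges[of h] finite_zigzag_edges[of h] two_le_h N_eq by (intro card_seteq) auto
qed

lemma sigma0_edge_in_zigzag:
  assumes i: "i \<in> {1..N}"
  shows "{cyc_prev N (sigma0 N i), cyc_prev N (sigma0 N (cyc_next N i))} \<in> zigzag_edges h"
proof (cases "i \<le> h + 1")
  case True
  then have "cyc_next N i = i + 1" using N_eq two_le_h by (simp add: cyc_next_def)
  then show ?thesis using sigma0_edge_low_in_zigzag[OF two_le_h, of i] True i N_eq by simp
next
  case False
  then show ?thesis using sigma0_edge_high_in_zigzag[OF two_le_h, of i] i N_eq by simp
qed

lemma cycle_edges_sigma0: "cycle_edges N (sigma0 N) = shift_edges N 1 (zigzag_edges h)"
proof -
  have "cycle_edges N (sigma0 N) \<subseteq> shift_edges N 1 (zigzag_edges h)"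
  proof
    fix e assume "e \<in> cycle_edges N (sigma0 N)"
    then obtain i where i: "i \<in> {1..N}" and e: "e = {sigma0 N i, sigma0 N (cyc_next N i)}"
      by (auto simp: cycle_edges_def)
    have "sigma0 N i \<in> {1..N}" "sigma0 N (cyc_next N i) \<in> {1..N}"
      using sigma0_in[OF two_le_h] i cyc_next_in[OF i] N_eq by auto
    then have "e = cyc_shift N 1 ` {cyc_prev N (sigma0 N i), cyc_prev N (sigma0 N (cyc_next N i))}"
      unfolding e using cyc_shift_1[OF cyc_prev_in] cyc_next_cyc_prev by simp
    then show "e \<in> shift_edges N 1 (zigzag_edges h)"
      unfolding shift_edges_def using sigma0_edge_in_zigzag[OF i] by blast
  qed
  moreover have "card (cycle_edges N (sigma0 N)) = N"
    using card_cycle_edges[OF _ three_le_N] inj_on_sigma0[OF two_le_h] N_eq by simp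
  moreover have "card (shift_edges N 1 (zigzag_edges h)) \<le> card (zigzag_edges h)"
    unfolding shift_edges_def by (rule card_image_le[OF finite_zigzag_edges])
  ultimately show ?thesis using card_zigzag_edges[of h] finite_zigzag_edges two_le_h N_eq
    by (intro card_seteq) (auto simp: shift_edges_def)
qed

lemma stable_tour_shift_eq_zigzag:
  assumes perm: "\<pi> permutes {1..N}" and stable: "two_opt_stable N \<pi>"
  obtains t where "shift_edges N t (cycle_edges N \<pi>) = zigzag_edges h"
proof -
  have bij: "bij_betw \<pi> {1..N} {1..N}" using permutes_imp_bij[OF perm] .
  have range: "\<pi> ` {1..N} \<subseteq> {1..N}" using bij_betw_imp_surj_on[OF bij] by simp
  interpret ladder h "tour_up \<pi>" "tour_down \<pi>" "tour_rung \<pi>" by (rule stable_tour_ladder[OF bij stable])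
  obtain g where g: "1 \<le> g" "g \<le> h" "\<not> tour_up \<pi> g" "\<not> tour_down \<pi> g"
    using all_diagonals stable_tour_not_all_diagonals[OF bij stable] by blast
  define t where "t = h - g"
  define \<rho> where "\<rho> = cyc_shift N t \<circ> \<pi>"
  have bij_\<rho>: "bij_betw \<rho> {1..N} {1..N}"
    unfolding \<rho>_def by (rule bij_betw_trans[OF bij bij_betw_cyc_shift[OF N_pos]])
  have stable_\<rho>: "two_opt_stable N \<rho>"
    unfolding \<rho>_def by (rule two_opt_stable_cyc_shift[OF N_pos bij stable])
  have g_in: "g \<in> {1..N}" using g N_eq by auto
  have g_to_h: "cyc_shift N t g = h" using cyc_shift_eq[OF g_in, of t] g N_eq by (auto simp: t_def)
  have adj_\<rho>: "tour_adj N \<rho> (cyc_shift N t a) (cyc_shift N t b) = tour_adj N \<pi> a b"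
    if "a \<in> {1..N}" "b \<in> {1..N}" for a b
    unfolding \<rho>_def by (rule tour_adj_cyc_shift[OF range that])
  have "tour_up \<rho> h = tour_adj N \<rho> (cyc_shift N t g) (cyc_shift N t (cyc_shift N (h + 1) g))"
    by (simp only: tour_up_def cyc_shift_commute[of N t "h + 1" g] g_to_h)
  also have "\<dots> = tour_up \<pi> g"
    unfolding tour_up_def by (rule adj_\<rho>[OF g_in cyc_shift_in[OF N_pos]])
  finally have "tour_up \<rho> h = tour_up \<pi> g" .
  moreover have "tour_down \<rho> h
      = tour_adj N \<rho> (cyc_shift N t (cyc_shift N h g)) (cyc_shift N t (cyc_shift N 1 g))"
    by (simp only: tour_down_def cyc_shift_commute[of N t h g] cyc_shift_commute[of N t 1 g] g_to_h)
  moreover have "\<dots> = tour_down \<pi> g"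
    unfolding tour_down_def by (rule adj_\<rho>[OF cyc_shift_in[OF N_pos] cyc_shift_in[OF N_pos]])
  ultimately have "cycle_edges N \<rho> = zigzag_edges h"
    using stable_tour_edges_eq_zigzag[OF bij_\<rho> stable_\<rho>] g by simp
  then show ?thesis using that[of t] unfolding \<rho>_def cycle_edges_cyc_shift by simp
qed

lemma stable_tour_eq_sigma0_rotation:
  assumes perm: "\<pi> permutes {1..N}" and stable: "two_opt_stable N \<pi>"
  obtains k where "k \<in> {1..N}" "cycle_edges N ((tau N ^^ k) \<circ> sigma0 N) = cycle_edges N \<pi>"
proof -
  obtain t where t: "shift_edges N t (cycle_edges N \<pi>) = zigzag_edges h"
    using stable_tour_shift_eq_zigzag[OF perm stable] .
  define k where "k = N - (t + 1) mod N"
  have k: "k \<in> {1..N}" using mod_less_divisor[OF N_pos, of "t + 1"] by (auto simp: k_def)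
  have "(k + (1 + t)) mod N = 0"
    using add_mod_complement[OF N_pos, of "t + 1"] by (simp add: k_def ac_simps)
  have range: "\<pi> ` {1..N} \<subseteq> {1..N}" using permutes_image[OF perm] by simp
  have "cycle_edges N ((tau N ^^ k) \<circ> sigma0 N) = cycle_edges N (cyc_shift N k \<circ> sigma0 N)"
    using sigma0_in[OF two_le_h] N_eq by (intro cycle_edges_cong) (simp add: funpow_tau_eq_cyc_shift)
  also have "\<dots> = shift_edges N (k + (1 + t)) (cycle_edges N \<pi>)"
    unfolding cycle_edges_cyc_shift cycle_edges_sigma0 t[symmetric] shift_edges_add ..
  also have "\<dots> = cycle_edges N \<pi>"
    by (rule shift_edges_multiple[OF Union_cycle_edges_subset[OF range] \<open>(k + (1 + t)) mod N = 0\<close>])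
  finally show ?thesis using that k by blast
qed

end

theorem proposition4:
  fixes N :: nat and p :: real and r :: "nat \<Rightarrow> real" and H :: "nat set set"
  assumes "N \<ge> 4" and "even N" and "p < 0"
    and "\<forall>i\<in>{1..N}. 0 \<le> r i \<and> r i \<le> 1"
    and "strict_mono_on {1..N} r"
    and "ham_cycle N H"
  shows "(MIN k\<in>{1..N}. cost r p (cycle_edges N ((tau N ^^ k) \<circ> sigma0 N))) \<le> cost r p H"
proof -
  obtain h where "N = 2 * h" using \<open>even N\<close> by blast
  then interpret even_tour N h using \<open>N \<ge> 4\<close> by unfold_locales auto
  obtain \<pi>H where \<pi>H: "\<pi>H permutes {1..N}" "H = cycle_edges N \<pi>H"
    using \<open>ham_cycle N H\<close> by (auto simp: ham_cycle_def)
  obtain \<pi> where \<pi>: "\<pi> permutes {1..N}"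
    and opt: "\<And>\<pi>'. \<pi>' permutes {1..N} \<Longrightarrow> tour_cost r p N \<pi> \<le> tour_cost r p N \<pi>'"
    using ex_optimal_tour by blast
  have "two_opt_stable N \<pi>"
    using optimal_tour_two_opt_stable[OF \<pi> \<open>p < 0\<close> \<open>strict_mono_on {1..N} r\<close> opt] .
  then obtain k where k: "k \<in> {1..N}" "cycle_edges N ((tau N ^^ k) \<circ> sigma0 N) = cycle_edges N \<pi>"
    using stable_tour_eq_sigma0_rotation[OF \<pi>] by blast
  have cost_eq: "cost r p (cycle_edges N \<sigma>) = tour_cost r p N \<sigma>" if "\<sigma> permutes {1..N}" for \<sigma>
    using cost_cycle_edges[OF bij_betw_imp_inj_on[OF permutes_imp_bij[OF that]] three_le_N] .
  have "(MIN k\<in>{1..N}. cost r p (cycle_edges N ((tau N ^^ k) \<circ> sigma0 N)))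
      \<le> cost r p (cycle_edges N ((tau N ^^ k) \<circ> sigma0 N))"
    using k(1) by (intro Min_le) auto
  also have "\<dots> = tour_cost r p N \<pi>" using k(2) cost_eq[OF \<pi>] by simp
  also have "\<dots> \<le> tour_cost r p N \<pi>H" using opt[OF \<pi>H(1)] .
  also have "\<dots> = cost r p H" using cost_eq[OF \<pi>H(1)] \<pi>H(2) by simp
  finally show ?thesis .
qed

end
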